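(* Let $\alpha\in(0,1/2)$ and consider a single obstacle $V^\varepsilon_\alpha$ centered at the origin. Suppose the particle enters $B(0,\varepsilon)$ at time $0$ at position $x^-$ with $|x^-|=\varepsilon$ and velocity $v^-$, $|v^-|=1$, and exits at time $\tau$ with velocity $v^+$. Let $\hat x(s)=x^-+sv^-$ be the unperturbed straight line and $\hat\tau=-2x^-\cdot v^-$ its exit time from $B(0,\varepsilon)$. Set $F^\varepsilon_\alpha=-\nabla V^\varepsilon_\alpha$ and $X_1:=\int_0^{\hat\tau}F^\varepsilon_\alpha(\hat x(s))\,ds$. Then, with constants uniform in the impact parameter, as $\varepsilon\to0$: (i) $|\tau-\hat\tau|=O(\varepsilon^{1+\alpha})$; (ii) $X_1\cdot v^-=0$ and $|X_1|=O(\varepsilon^\alpha)$; (iii) the deflection angle $\theta$ between $v^-$ and $v^+$ satisfies $\theta^2=|X_1|^2+O(\varepsilon^{3\alpha})$; (iv) $v^+-v^-=X_1+X_{21}+O(\varepsilon^{3\alpha})$ where $X_{21}:=\int_0^{\hat\tau}\int_0^s(s-u)\,\nabla F^\varepsilon_\alpha(\hat x(s))F^\varepsilon_\alpha(\hat x(u))\,du\,ds=O(\varepsilon^{2\alpha})$.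
   Context: $V:\mathbb{R}^2\to\mathbb{R}$ is smooth, radial, supported in the closed unit ball; $V^\varepsilon_\alpha(x)=\varepsilon^\alpha V(|x|/\varepsilon)$. The particle moves according to $\dot x=v$, $\dot v=-\nabla V^\varepsilon_\alpha(x)$. *)

theory Defs
  imports "HOL-Analysis.Analysis"
begin

fun iter_dderiv :: "(real^2) list \<Rightarrow> (real^2 \<Rightarrow> real) \<Rightarrow> real^2 \<Rightarrow> real" where
  "iter_dderiv [] f = f"
| "iter_dderiv (h # hs) f = (\<lambda>x. frechet_derivative (iter_dderiv hs f) (at x) h)"

text \<open>Smooth (C-infinity): every iterated directional derivative exists as a
  Frechet-differentiable (hence continuous) function on the whole plane.\<close>
definition smooth2 :: "(real^2 \<Rightarrow> real) \<Rightarrow> bool" where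
  "smooth2 f \<longleftrightarrow> (\<forall>hs x. iter_dderiv hs f differentiable (at x))"

definition radial2 :: "(real^2 \<Rightarrow> real) \<Rightarrow> bool" where
  "radial2 f \<longleftrightarrow> (\<forall>x y. norm x = norm y \<longrightarrow> f x = f y)"

definition grad :: "(real^2 \<Rightarrow> real) \<Rightarrow> real^2 \<Rightarrow> real^2" where
  "grad f x = (SOME D. (f has_derivative (\<lambda>h. D \<bullet> h)) (at x))"

definition Veps :: "(real^2 \<Rightarrow> real) \<Rightarrow> real \<Rightarrow> real \<Rightarrow> real^2 \<Rightarrow> real" where
  "Veps V \<alpha> \<epsilon> x = \<epsilon> powr \<alpha> * V ((1 / \<epsilon>) *\<^sub>R x)"

definition Feps :: "(real^2 \<Rightarrow> real) \<Rightarrow> real \<Rightarrow> real \<Rightarrow> real^2 \<Rightarrow> real^2" where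
  "Feps V \<alpha> \<epsilon> x = - grad (Veps V \<alpha> \<epsilon>) x"

text \<open>Exit time of the free straight line from B(0,eps): -2 x.v\<close>
definition tau_hat :: "real^2 \<Rightarrow> real^2 \<Rightarrow> real" where
  "tau_hat xm vm = - 2 * (xm \<bullet> vm)"

definition X1 :: "(real^2 \<Rightarrow> real) \<Rightarrow> real \<Rightarrow> real \<Rightarrow> real^2 \<Rightarrow> real^2 \<Rightarrow> real^2" where
  "X1 V \<alpha> \<epsilon> xm vm = integral {0..tau_hat xm vm} (\<lambda>s. Feps V \<alpha> \<epsilon> (xm + s *\<^sub>R vm))"

definition X21 :: "(real^2 \<Rightarrow> real) \<Rightarrow> real \<Rightarrow> real \<Rightarrow> real^2 \<Rightarrow> real^2 \<Rightarrow> real^2" where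
  "X21 V \<alpha> \<epsilon> xm vm = integral {0..tau_hat xm vm} (\<lambda>s. integral {0..s} (\<lambda>u.
      (s - u) *\<^sub>R frechet_derivative (Feps V \<alpha> \<epsilon>) (at (xm + s *\<^sub>R vm))
                    (Feps V \<alpha> \<epsilon> (xm + u *\<^sub>R vm))))"

definition vec_angle :: "real^2 \<Rightarrow> real^2 \<Rightarrow> real" where
  "vec_angle a b = arccos ((a \<bullet> b) / (norm a * norm b))"

end

theory Submission
  imports Defs
begin

text \<open>
  A smooth \<open>V\<close> vanishing outside the
  unit ball has bounded gradient, bounded Hessian and Lipschitz Hessian.  After
  rescaling, \<open>F = F\<^sup>\<epsilon>\<^sub>\<alpha>\<close> satisfies \<open>|F| \<le> k/\<epsilon>\<close>, \<open>|DF| \<le> k/\<epsilon>\<^sup>2\<close>, \<open>Lip(DF) \<le> k/\<epsilon>\<^sup>3\<close>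
  with \<open>k = K \<epsilon>\<^sup>\<alpha>\<close>, and \<open>F\<close>, \<open>DF\<close> vanish outside \<open>B(0,\<epsilon>)\<close>.

  For ANY force field with these bounds and \<open>k \<le> 1/64\<close>, a trajectory crossing
  \<open>B(0,\<epsilon>)\<close> satisfies \<open>|\<tau> - \<tau>\<^sub>h\<^sub>a\<^sub>t| = O(k\<epsilon>)\<close>, \<open>|X1| = O(k)\<close>, \<open>|X21| = O(k\<^sup>2)\<close> and
  \<open>v\<^sup>+ - v\<^sup>- = X1 + X21 + O(k\<^sup>3)\<close>.  The trajectory is compared with the free line by
  mean value estimates of zeroth, first and second order in \<open>F\<close>; the mismatch of
  the exit times is harmless because \<open>F\<close> vanishes to second order, and \<open>DF\<close> to
  first order, at the exit point of the line.

  Radial symmetry enters only through energy conservation (\<open>|v\<^sup>+| = 1\<close>) and the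
  identity \<open>X1 \<bullet> v\<^sup>- = 0\<close>; the angle estimate then follows from elementary
  trigonometry.  The main theorem instantiates (2) with \<open>k = K \<epsilon>\<^sup>\<alpha>\<close>, which is
  \<open>\<le> 1/64\<close> for small \<open>\<epsilon>\<close> (only \<open>\<alpha> > 0\<close> is needed), and converts powers of \<open>k\<close>
  into powers of \<open>\<epsilon>\<close>.
\<close>

lemma vector_mvt_bound:
  fixes f :: "real \<Rightarrow> 'a::real_normed_vector"
  assumes "a \<le> b" "{a..b} \<subseteq> S"
    and "\<And>t. t \<in> {a..b} \<Longrightarrow> (f has_vector_derivative f' t) (at t within S)"
    and "\<And>t. t \<in> {a..b} \<Longrightarrow> norm (f' t) \<le> B"
  shows "norm (f b - f a) \<le> B * (b - a)"
proof -
  have "norm (f b - f a) \<le> B * norm (b - a)"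
  proof (rule differentiable_bound[where S="{a..b}" and f'="\<lambda>t h. h *\<^sub>R f' t"])
    show "convex {a..b}" by simp
    fix t assume t: "t \<in> {a..b}"
    show "(f has_derivative (\<lambda>h. h *\<^sub>R f' t)) (at t within {a..b})"
      using has_vector_derivative_within_subset[OF assms(3)[OF t] assms(2)]
      by (simp add: has_vector_derivative_def)
    show "onorm (\<lambda>h. h *\<^sub>R f' t) \<le> B"
      by (rule onorm_le) (use assms(4)[OF t] in \<open>simp add: mult.commute[of B] mult_left_mono\<close>)
  qed (use assms(1) in auto)
  then show ?thesis using assms(1) by simp
qed

lemma lipschitz_from_derivative_bound:
  fixes F :: "'a::euclidean_space \<Rightarrow> 'b::real_normed_vector"
  assumes "\<And>y. (F has_derivative DF y) (at y)" "\<And>y h. norm (DF y h) \<le> c * norm h"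
  shows "norm (F y - F z) \<le> c * norm (y - z)"
proof -
  have "norm (F y - F z) \<le> c * norm (y - z)"
  proof (rule differentiable_bound[where S=UNIV and f'=DF])
    fix x
    show "(F has_derivative DF x) (at x within UNIV)" by (rule assms(1))
    show "onorm (DF x) \<le> c" by (rule onorm_le) (rule assms(2))
  qed auto
  then show ?thesis .
qed

lemma integral_upper_limit_diff:
  fixes f :: "real \<Rightarrow> 'a::banach"
  assumes "0 \<le> a" "0 \<le> b" "continuous_on {0..max a b} f"
    and "\<And>t. min a b \<le> t \<Longrightarrow> t \<le> max a b \<Longrightarrow> norm (f t) \<le> B"
  shows "norm (integral {0..a} f - integral {0..b} f) \<le> B * \<bar>a - b\<bar>"
proof -
  have ordered: "norm (integral {0..p} f - integral {0..q} f) \<le> B * (q - p)"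
    if pq: "0 \<le> p" "p \<le> q" "continuous_on {0..q} f" "\<And>t. p \<le> t \<Longrightarrow> t \<le> q \<Longrightarrow> norm (f t) \<le> B"
    for p q
  proof -
    have "integral {0..p} f + integral {p..q} f = integral {0..q} f"
      by (rule Henstock_Kurzweil_Integration.integral_combine) (use pq integrable_continuous_real in auto)
    then have "integral {0..p} f - integral {0..q} f = - integral {p..q} f"
      by (simp add: algebra_simps)
    moreover have "norm (integral {p..q} f) \<le> B * (q - p)"
      by (rule integral_bound) (use pq in \<open>auto intro: continuous_on_subset[OF pq(3)]\<close>)
    ultimately show ?thesis by simp
  qed
  show ?thesis
  proof (cases "a \<le> b")
    case True
    then show ?thesis using ordered[of a b] assms by auto
  next
    case False
    then have "norm (integral {0..b} f - integral {0..a} f) \<le> B * (a - b)"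
      using ordered[of b a] assms by auto
    then show ?thesis using False by (simp add: norm_minus_commute)
  qed
qed

lemma frechet_derivative_zero_on_open:
  fixes f :: "'a::real_normed_vector \<Rightarrow> 'b::real_normed_vector"
  assumes "f differentiable (at y)" "open S" "y \<in> S" "\<And>z. z \<in> S \<Longrightarrow> f z = 0"
  shows "frechet_derivative f (at y) h = 0"
proof -
  have "(f has_derivative frechet_derivative f (at y)) (at y)"
    using assms(1) frechet_derivative_works by blast
  then have "((\<lambda>_. 0) has_derivative frechet_derivative f (at y)) (at y)"
    by (rule has_derivative_transform_within_open[OF _ assms(2,3)]) (use assms(4) in auto)
  moreover have "((\<lambda>_. 0::'b) has_derivative (\<lambda>_. 0)) (at y)" by simp
  ultimately have "frechet_derivative f (at y) = (\<lambda>_. 0)" using has_derivative_unique by blast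
  then show ?thesis by simp
qed

lemma has_derivative_basis_expansion:
  fixes f :: "'a::euclidean_space \<Rightarrow> real"
  assumes "f differentiable (at y)"
  shows "(f has_derivative (\<lambda>h. \<Sum>b\<in>Basis. (h \<bullet> b) * frechet_derivative f (at y) b)) (at y)"
proof -
  have D: "(f has_derivative frechet_derivative f (at y)) (at y)"
    using assms frechet_derivative_works by blast
  then have lin: "linear (frechet_derivative f (at y))"
    using has_derivative_linear by blast
  have expand: "frechet_derivative f (at y) h = (\<Sum>b\<in>Basis. (h \<bullet> b) * frechet_derivative f (at y) b)"
    for h
  proof -
    have "frechet_derivative f (at y) h = frechet_derivative f (at y) (\<Sum>b\<in>Basis. (h \<bullet> b) *\<^sub>R b)"
      by (simp add: euclidean_representation)
    also have "\<dots> = (\<Sum>b\<in>Basis. (h \<bullet> b) * frechet_derivative f (at y) b)"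
      using lin by (simp add: linear_sum linear_scale)
    finally show ?thesis .
  qed
  show ?thesis
    by (rule has_derivative_eq_rhs[OF D]) (rule ext, rule expand)
qed

lemma compact_support_bounded:
  fixes f :: "'a::euclidean_space \<Rightarrow> real"
  assumes "continuous_on UNIV f" "\<And>y. norm y > 1 \<Longrightarrow> f y = 0"
  shows "\<exists>B. \<forall>y. \<bar>f y\<bar> \<le> B"
proof -
  have "compact (f ` cball 0 1)"
    by (rule compact_continuous_image) (use assms(1) continuous_on_subset in auto)
  then obtain B where B: "\<And>y. y \<in> cball 0 1 \<Longrightarrow> \<bar>f y\<bar> \<le> B"
    using compact_imp_bounded bounded_iff by (metis image_eqI real_norm_def)
  have "0 \<le> B" using B[of 0] by simp
  show ?thesis
  proof (intro exI allI)
    fix y show "\<bar>f y\<bar> \<le> B" using B[of y] assms(2)[of y] \<open>0 \<le> B\<close> by (cases "norm y > 1") auto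
  qed
qed

lemma grad_eqI:
  assumes "(f has_derivative (\<lambda>h. D \<bullet> h)) (at x)"
  shows "grad f x = D"
proof -
  define D' where "D' = grad f x"
  have "(f has_derivative (\<lambda>h. D' \<bullet> h)) (at x)"
    unfolding D'_def grad_def using someI_ex[of "\<lambda>D. (f has_derivative (\<lambda>h. D \<bullet> h)) (at x)"] assms
    by blast
  then have "(\<lambda>h. D' \<bullet> h) = (\<lambda>h. D \<bullet> h)" using assms has_derivative_unique by blast
  then have "D' \<bullet> (D' - D) = D \<bullet> (D' - D)" by metis
  then have "(D' - D) \<bullet> (D' - D) = 0" by (simp add: inner_diff_left)
  then show ?thesis unfolding D'_def by simp
qed

lemma sin_cubic_lower:
  fixes y :: real assumes "0 \<le> y" shows "y - y^3/6 \<le> sin y"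
proof -
  have "\<bar>sin y - (\<Sum>m<3. sin_coeff m * y ^ m)\<bar> \<le> inverse (fact 3) * \<bar>y\<bar> ^ 3"
    by (rule Maclaurin_sin_bound)
  moreover have "(\<Sum>m<3. sin_coeff m * y ^ m) = y"
    by (simp add: sin_coeff_def eval_nat_numeral)
  moreover have "inverse (fact 3) * \<bar>y\<bar> ^ 3 = y^3/6" using assms by (simp add: fact_numeral)
  ultimately have "\<bar>sin y - y\<bar> \<le> y^3/6" by simp
  then have "- (sin y - y) \<le> y^3/6" by (simp only: abs_le_iff)
  then show ?thesis by (simp add: algebra_simps)
qed

lemma angle_sq_chord_sq:
  fixes u w :: "'a::real_inner"
  assumes u: "norm u = 1" and w: "norm w = 1"
  shows "\<bar>(arccos (u \<bullet> w))\<^sup>2 - (norm (w - u))\<^sup>2\<bar> \<le> 8 * (norm (w - u))^4"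
proof -
  define c where "c = u \<bullet> w"
  have c1: "\<bar>c\<bar> \<le> 1" using Cauchy_Schwarz_ineq2[of u w] u w by (simp add: c_def)
  define \<theta> where "\<theta> = arccos c"
  have th0: "0 \<le> \<theta>" "\<theta> \<le> pi" using c1 by (auto simp: \<theta>_def intro!: arccos_lbound arccos_ubound)
  have cth: "cos \<theta> = c" using c1 by (simp add: \<theta>_def)
  have "u \<bullet> u = 1" "w \<bullet> w = 1" using u w by (simp_all add: norm_eq_1)
  then have chord: "(norm (w - u))\<^sup>2 = 2 - 2 * c"
    by (simp add: power2_norm_eq_inner inner_diff_left inner_diff_right inner_commute c_def)
  text \<open>With \<open>y = \<theta>/2\<close> and \<open>s = sin y\<close> the chord is \<open>2s\<close>, and \<open>y - s = O(s\<^sup>3)\<close>.\<close>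
  define y where "y = \<theta> / 2"
  define s where "s = sin y"
  have y0: "0 \<le> y" "y \<le> 2" using th0 pi_less_4 by (auto simp: y_def)
  have "cos \<theta> = 1 - 2 * s^2" using cos_double_sin[of y] by (simp add: s_def y_def)
  then have chord_s: "(norm (w - u))\<^sup>2 = 4 * s^2" using chord cth by simp
  have sy: "s \<le> y" using sin_x_le_x[OF y0(1)] by (simp add: s_def)
  have s0: "0 \<le> s" using th0 by (auto simp: s_def y_def intro!: sin_ge_zero)
  have sl: "y - y^3/6 \<le> s" using sin_cubic_lower[OF y0(1)] by (simp add: s_def)
  have "y^2 \<le> 2^2" using y0 by (intro power_mono) auto
  then have "y * y^2 \<le> y * 4" using y0 by (intro mult_left_mono) auto
  then have "y^3 \<le> 4 * y" by (simp add: eval_nat_numeral mult_ac)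
  then have ys: "y \<le> 3 * s" using sl by linarith
  have "(y - s) * (y + s) \<le> (y^3/6) * (2 * y)" using sl sy s0 y0 by (intro mult_mono) auto
  also have "\<dots> = y^4 / 3" by (simp add: eval_nat_numeral)
  also have "\<dots> \<le> (3 * s)^4 / 3" using ys y0 by (intro divide_right_mono power_mono) auto
  finally have diff: "(y - s) * (y + s) \<le> 27 * s^4" by (simp add: eval_nat_numeral)
  have "\<theta>^2 - (norm (w - u))\<^sup>2 = 4 * ((y - s) * (y + s))"
    using chord_s by (simp add: y_def power2_eq_square algebra_simps)
  moreover have "0 \<le> (y - s) * (y + s)" using sy s0 by simp
  moreover have "(norm (w - u))^4 = ((norm (w - u))\<^sup>2)^2" by simp
  then have "8 * (norm (w - u))^4 = 128 * s^4" using chord_s by (simp add: power_mult_distrib)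
  ultimately have "\<bar>\<theta>\<^sup>2 - (norm (w - u))\<^sup>2\<bar> \<le> 8 * (norm (w - u))^4" using diff by simp
  then show ?thesis unfolding \<theta>_def c_def .
qed

lemma angle_sq_first_order:
  fixes d X1 X21 :: "'a::real_inner" and \<theta> k :: real
  assumes k: "0 \<le> k" "k \<le> 1/64" and d: "norm d \<le> 4*k" and x1: "norm X1 \<le> 2*k"
    and x21: "norm X21 \<le> 8*k^2" and r: "norm (d - X1 - X21) \<le> 4000*k^3"
    and th: "\<bar>\<theta>\<^sup>2 - (norm d)\<^sup>2\<bar> \<le> 8 * (norm d)^4"
  shows "\<bar>\<theta>\<^sup>2 - (norm X1)\<^sup>2\<bar> \<le> 500 * k^3"
proof -
  have "4000*k^3 = (4000*k) * k^2" by (simp add: eval_nat_numeral)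
  also have "\<dots> \<le> 63 * k^2" using k by (intro mult_right_mono) auto
  finally have k3: "4000*k^3 \<le> 63 * k^2" .
  have "norm (d - X1) \<le> norm X21 + norm (d - X1 - X21)"
    using norm_triangle_ineq[of X21 "d - X1 - X21"] by simp
  then have minus: "norm (d - X1) \<le> 71 * k^2" using x21 r k3 by linarith
  have plus: "norm (d + X1) \<le> 6 * k" using norm_triangle_ineq[of d X1] d x1 by linarith
  have "(norm d)\<^sup>2 - (norm X1)\<^sup>2 = (d - X1) \<bullet> (d + X1)"
    by (simp add: power2_norm_eq_inner inner_diff_left inner_add_right inner_commute[of X1 d])
  then have "\<bar>(norm d)\<^sup>2 - (norm X1)\<^sup>2\<bar> \<le> norm (d - X1) * norm (d + X1)"
    using Cauchy_Schwarz_ineq2 by simp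
  also have "\<dots> \<le> (71 * k^2) * (6 * k)" using minus plus by (intro mult_mono) auto
  also have "\<dots> = 426 * k^3" by (simp add: eval_nat_numeral)
  finally have sq: "\<bar>(norm d)\<^sup>2 - (norm X1)\<^sup>2\<bar> \<le> 426 * k^3" .
  have "(norm d)^4 \<le> (4*k)^4" using d by (intro power_mono) auto
  also have "\<dots> = (256 * k) * k^3" by (simp add: eval_nat_numeral)
  also have "\<dots> \<le> 4 * k^3" using k by (intro mult_right_mono) auto
  finally have "8 * (norm d)^4 \<le> 32 * k^3" by linarith
  then show ?thesis using th sq by linarith
qed

lemma quartic_le_cubic:
  fixes k c :: real
  assumes "0 \<le> k" "k \<le> 1/64" "0 \<le> c"
  shows "c * k^4 \<le> (c/64) * k^3"
proof -
  have "c * k^4 = (c * k) * k^3" by (simp add: eval_nat_numeral mult_ac)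
  also have "\<dots> \<le> (c/64) * k^3"
    using mult_left_mono[OF assms(2,3)] assms by (intro mult_right_mono) auto
  finally show ?thesis .
qed

section \<open>Bounds for a smooth compactly supported profile and its rescaling\<close>

locale profile =
  fixes V :: "real^2 \<Rightarrow> real"
  assumes smooth: "smooth2 V" and supp: "\<And>y. norm y > 1 \<Longrightarrow> V y = 0"
begin

declare iter_dderiv.simps[simp del]

lemma deriv_differentiable: "iter_dderiv hs V differentiable (at x)"
  using smooth unfolding smooth2_def by blast

lemma deriv_continuous: "continuous_on UNIV (iter_dderiv hs V)"
  by (simp add: continuous_at_imp_continuous_on differentiable_imp_continuous_within
      deriv_differentiable)

lemma deriv_has_derivative:
  "(iter_dderiv hs V has_derivative (\<lambda>h. \<Sum>b\<in>Basis. (h \<bullet> b) * iter_dderiv (b#hs) V y)) (at y)"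
  using has_derivative_basis_expansion[OF deriv_differentiable] by (simp add: iter_dderiv.simps)

lemma deriv_vanish_outside: "norm y > 1 \<Longrightarrow> iter_dderiv hs V y = 0"
proof (induction hs arbitrary: y)
  case Nil then show ?case using supp by (simp add: iter_dderiv.simps)
next
  case (Cons h hs)
  have "{z::real^2. 1 < norm z} = - cball 0 1" by auto
  then have "open {z::real^2. 1 < norm z}" by (simp add: open_Compl)
  then have "frechet_derivative (iter_dderiv hs V) (at y) h = 0"
    using frechet_derivative_zero_on_open[OF deriv_differentiable] Cons by blast
  then show ?case by (simp add: iter_dderiv.simps)
qed

lemma deriv_vanish: "norm y \<ge> 1 \<Longrightarrow> iter_dderiv hs V y = 0"
proof -
  assume y: "norm y \<ge> 1"
  have closed: "closed {z. iter_dderiv hs V z = 0}"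
    using continuous_closed_preimage_constant[OF deriv_continuous closed_UNIV] by simp
  have "- cball 0 1 \<subseteq> {z. iter_dderiv hs V z = 0}" using deriv_vanish_outside by auto
  then have "closure (- cball 0 1) \<subseteq> {z. iter_dderiv hs V z = 0}"
    by (rule closure_minimal[OF _ closed])
  moreover have "closure (- cball (0::real^2) 1) = - ball 0 1" by (simp add: closure_complement)
  ultimately show ?thesis using y by auto
qed

definition deriv_bound :: "(real^2) list \<Rightarrow> real" where
  "deriv_bound hs = (SOME B. \<forall>y. \<bar>iter_dderiv hs V y\<bar> \<le> B)"

lemma deriv_bounded: "\<bar>iter_dderiv hs V y\<bar> \<le> deriv_bound hs"
  using someI_ex[OF compact_support_bounded[OF deriv_continuous deriv_vanish_outside]]
  unfolding deriv_bound_def by blast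

lemma deriv_bound_nonneg: "0 \<le> deriv_bound hs"
  using deriv_bounded[of hs 0] by linarith

definition deriv_lip :: "(real^2) list \<Rightarrow> real" where
  "deriv_lip hs = (\<Sum>b\<in>Basis. deriv_bound (b#hs))"

lemma deriv_lip_nonneg: "0 \<le> deriv_lip hs"
  unfolding deriv_lip_def by (simp add: deriv_bound_nonneg sum_nonneg)

lemma deriv_lipschitz:
  "\<bar>iter_dderiv hs V y - iter_dderiv hs V z\<bar> \<le> deriv_lip hs * norm (y - z)"
proof -
  have "norm (iter_dderiv hs V y - iter_dderiv hs V z) \<le> deriv_lip hs * norm (y - z)"
  proof (rule lipschitz_from_derivative_bound[OF deriv_has_derivative])
    fix x h :: "real^2"
    have "norm (\<Sum>b\<in>Basis. (h \<bullet> b) * iter_dderiv (b#hs) V x)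
        \<le> (\<Sum>b\<in>Basis. norm ((h \<bullet> b) * iter_dderiv (b#hs) V x))"
      by (rule norm_sum)
    also have "\<dots> \<le> (\<Sum>b\<in>Basis. norm h * deriv_bound (b#hs))"
    proof (rule sum_mono)
      fix b :: "real^2" assume "b \<in> Basis"
      then show "norm ((h \<bullet> b) * iter_dderiv (b#hs) V x) \<le> norm h * deriv_bound (b#hs)"
        unfolding norm_mult real_norm_def abs_mult
        by (intro mult_mono Basis_le_norm deriv_bounded) auto
    qed
    also have "\<dots> = deriv_lip hs * norm h"
      by (simp add: deriv_lip_def sum_distrib_left mult.commute)
    finally show "norm (\<Sum>b\<in>Basis. (h \<bullet> b) * iter_dderiv (b#hs) V x) \<le> deriv_lip hs * norm h" .
  qed
  then show ?thesis by simp
qed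

definition gradV :: "real^2 \<Rightarrow> real^2" where
  "gradV y = (\<Sum>b\<in>Basis. iter_dderiv [b] V y *\<^sub>R b)"

definition hessV :: "real^2 \<Rightarrow> real^2 \<Rightarrow> real^2" where
  "hessV y h = (\<Sum>b\<in>Basis. (\<Sum>b2\<in>Basis. (h \<bullet> b2) * iter_dderiv [b2, b] V y) *\<^sub>R b)"

lemma V_has_derivative: "(V has_derivative (\<lambda>h. gradV y \<bullet> h)) (at y)"
proof -
  have "(V has_derivative (\<lambda>h. \<Sum>b\<in>Basis. (h \<bullet> b) * iter_dderiv [b] V y)) (at y)"
    using deriv_has_derivative[of "[]"] by (simp add: iter_dderiv.simps)
  moreover have "(\<lambda>h. \<Sum>b\<in>Basis. (h \<bullet> b) * iter_dderiv [b] V y) = (\<lambda>h. gradV y \<bullet> h)"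
    unfolding gradV_def inner_sum_left by (intro ext sum.cong refl) (simp add: inner_commute)
  ultimately show ?thesis by simp
qed

lemma gradV_has_derivative: "(gradV has_derivative hessV y) (at y)"
proof -
  have "((\<lambda>y. \<Sum>b\<in>Basis. iter_dderiv [b] V y *\<^sub>R b) has_derivative
        (\<lambda>h. \<Sum>b\<in>Basis. (\<Sum>b2\<in>Basis. (h \<bullet> b2) * iter_dderiv [b2, b] V y) *\<^sub>R b)) (at y)"
    by (intro has_derivative_sum has_derivative_scaleR_left deriv_has_derivative)
  then show ?thesis by (simp add: gradV_def[abs_def] hessV_def[abs_def])
qed

lemma hessV_linear: "linear (hessV y)"
  using gradV_has_derivative has_derivative_linear by blast

definition C_grad :: real where "C_grad = (\<Sum>b\<in>Basis. deriv_bound [b])"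
definition C_hess :: real where "C_hess = (\<Sum>b\<in>Basis. \<Sum>b2\<in>Basis. deriv_bound [b2, b])"
definition C_lip :: real where "C_lip = (\<Sum>b\<in>Basis. \<Sum>b2\<in>Basis. deriv_lip [b2, b])"

lemma profile_constants_nonneg: "0 \<le> C_grad" "0 \<le> C_hess" "0 \<le> C_lip"
  unfolding C_grad_def C_hess_def C_lip_def
  by (auto simp: deriv_bound_nonneg deriv_lip_nonneg intro!: sum_nonneg)

lemma gradV_bound: "norm (gradV y) \<le> C_grad"
proof -
  have "norm (gradV y) \<le> (\<Sum>b\<in>Basis. norm (iter_dderiv [b] V y *\<^sub>R b))"
    unfolding gradV_def by (rule norm_sum)
  also have "\<dots> \<le> (\<Sum>b\<in>Basis. deriv_bound [b])"
    by (rule sum_mono) (simp add: deriv_bounded)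
  finally show ?thesis by (simp add: C_grad_def)
qed

lemma matrix_apply_bound:
  fixes M :: "real^2 \<Rightarrow> real^2 \<Rightarrow> real"
  assumes "\<And>b b2. \<bar>M b2 b\<bar> \<le> c b2 b"
  shows "norm (\<Sum>b\<in>(Basis::(real^2) set). (\<Sum>b2\<in>Basis. (h \<bullet> b2) * M b2 b) *\<^sub>R b)
           \<le> (\<Sum>b\<in>Basis. \<Sum>b2\<in>Basis. c b2 b) * norm h"
proof -
  have "norm (\<Sum>b\<in>(Basis::(real^2) set). (\<Sum>b2\<in>Basis. (h \<bullet> b2) * M b2 b) *\<^sub>R b)
      \<le> (\<Sum>b\<in>Basis. norm ((\<Sum>b2\<in>Basis. (h \<bullet> b2) * M b2 b) *\<^sub>R b))"
    by (rule norm_sum)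
  also have "\<dots> \<le> (\<Sum>b\<in>Basis. \<Sum>b2\<in>Basis. norm h * c b2 b)"
  proof (rule sum_mono)
    fix b :: "real^2" assume b: "b \<in> Basis"
    have "norm ((\<Sum>b2\<in>Basis. (h \<bullet> b2) * M b2 b) *\<^sub>R b) = \<bar>\<Sum>b2\<in>Basis. (h \<bullet> b2) * M b2 b\<bar>"
      using b by simp
    also have "\<dots> \<le> (\<Sum>b2\<in>Basis. \<bar>(h \<bullet> b2) * M b2 b\<bar>)" by (rule sum_abs)
    also have "\<dots> \<le> (\<Sum>b2\<in>Basis. norm h * c b2 b)"
    proof (rule sum_mono)
      fix b2 :: "real^2" assume "b2 \<in> Basis"
      then show "\<bar>(h \<bullet> b2) * M b2 b\<bar> \<le> norm h * c b2 b"
        unfolding abs_mult by (intro mult_mono Basis_le_norm assms) auto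
    qed
    finally show "norm ((\<Sum>b2\<in>Basis. (h \<bullet> b2) * M b2 b) *\<^sub>R b) \<le> (\<Sum>b2\<in>Basis. norm h * c b2 b)" .
  qed
  also have "\<dots> = (\<Sum>b\<in>Basis. \<Sum>b2\<in>Basis. c b2 b) * norm h"
    by (simp add: sum_distrib_left sum_distrib_right mult.commute)
  finally show ?thesis .
qed

lemma hessV_bound: "norm (hessV y h) \<le> C_hess * norm h"
  unfolding hessV_def C_hess_def by (rule matrix_apply_bound) (rule deriv_bounded)

lemma hessV_lipschitz: "norm (hessV y h - hessV z h) \<le> C_lip * norm (y - z) * norm h"
proof -
  have diff: "hessV y h - hessV z h
      = (\<Sum>b\<in>Basis. (\<Sum>b2\<in>Basis. (h \<bullet> b2) * (iter_dderiv [b2, b] V y - iter_dderiv [b2, b] V z)) *\<^sub>R b)"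
    by (simp add: hessV_def right_diff_distrib sum_subtractf scaleR_diff_left)
  have "norm (hessV y h - hessV z h)
      \<le> (\<Sum>b\<in>Basis. \<Sum>b2\<in>Basis. deriv_lip [b2, b] * norm (y - z)) * norm h"
    unfolding diff by (rule matrix_apply_bound) (rule deriv_lipschitz)
  also have "(\<Sum>b\<in>Basis. \<Sum>b2\<in>Basis. deriv_lip [b2, b] * norm (y - z)) = C_lip * norm (y - z)"
    unfolding C_lip_def sum_distrib_right ..
  finally show ?thesis .
qed

lemma gradV_taylor: "norm (gradV y - gradV z - hessV z (y - z)) \<le> C_lip * (norm (y - z))\<^sup>2"
proof -
  have "norm (gradV y - gradV z - hessV z (y - z)) \<le> norm (y - z) * (C_lip * norm (y - z))"
  proof (rule differentiable_bound_linearization[where S="closed_segment z y" and f'=hessV])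
    fix t :: real assume "t \<in> {0..1}"
    then show "z + t *\<^sub>R (y - z) \<in> closed_segment z y"
      unfolding closed_segment_def by (auto intro!: exI[of _ t] simp: algebra_simps)
  next
    fix x assume "x \<in> closed_segment z y"
    show "(gradV has_derivative hessV x) (at x within closed_segment z y)"
      using gradV_has_derivative by (rule has_derivative_at_withinI)
  next
    fix x assume x: "x \<in> closed_segment z y"
    show "onorm (hessV x - hessV z) \<le> C_lip * norm (y - z)"
    proof (rule onorm_le)
      fix h
      have "norm ((hessV x - hessV z) h) \<le> C_lip * norm (x - z) * norm h"
        using hessV_lipschitz by simp
      also have "\<dots> \<le> C_lip * norm (y - z) * norm h"
        using segment_bound(1)[OF x] profile_constants_nonneg
        by (intro mult_right_mono mult_left_mono) auto
      finally show "norm ((hessV x - hessV z) h) \<le> C_lip * norm (y - z) * norm h" .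
    qed
  qed auto
  then show ?thesis by (simp add: power2_eq_square mult_ac)
qed

lemma gradV_vanish: "norm y \<ge> 1 \<Longrightarrow> gradV y = 0"
  by (simp add: gradV_def deriv_vanish)

lemma hessV_vanish: "norm y \<ge> 1 \<Longrightarrow> hessV y h = 0"
  by (simp add: hessV_def deriv_vanish)

end


context profile
begin

definition force :: "real \<Rightarrow> real \<Rightarrow> real^2 \<Rightarrow> real^2" where
  "force a e y = - ((e powr a / e) *\<^sub>R gradV ((1/e) *\<^sub>R y))"

definition dforce :: "real \<Rightarrow> real \<Rightarrow> real^2 \<Rightarrow> real^2 \<Rightarrow> real^2" where
  "dforce a e y h = - ((e powr a / e^2) *\<^sub>R hessV ((1/e) *\<^sub>R y) h)"

lemma scaling_has_derivative: "((\<lambda>x::real^2. (1/e) *\<^sub>R x) has_derivative (\<lambda>h. (1/e) *\<^sub>R h)) (at y)"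
  by (auto intro!: derivative_eq_intros)

lemma Veps_has_derivative:
  "(Veps V a e has_derivative (\<lambda>h. ((e powr a / e) *\<^sub>R gradV ((1/e) *\<^sub>R y)) \<bullet> h)) (at y)"
proof -
  have "((\<lambda>x. e powr a * V ((1/e) *\<^sub>R x)) has_derivative
          (\<lambda>h. e powr a * (gradV ((1/e) *\<^sub>R y) \<bullet> ((1/e) *\<^sub>R h)))) (at y)"
    by (intro has_derivative_mult_right has_derivative_compose[OF scaling_has_derivative V_has_derivative])
  then show ?thesis by (simp add: Veps_def[abs_def])
qed

lemma Feps_eq_force: "Feps V a e = force a e"
  by (intro ext) (simp add: Feps_def force_def grad_eqI[OF Veps_has_derivative])

lemma force_has_derivative: "(force a e has_derivative dforce a e y) (at y)"
proof -
  have "((\<lambda>x. - ((e powr a / e) *\<^sub>R gradV ((1/e) *\<^sub>R x))) has_derivative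
          (\<lambda>h. - ((e powr a / e) *\<^sub>R hessV ((1/e) *\<^sub>R y) ((1/e) *\<^sub>R h)))) (at y)"
    by (intro has_derivative_minus has_derivative_scaleR_right
        has_derivative_compose[OF scaling_has_derivative gradV_has_derivative])
  moreover have "(\<lambda>h. - ((e powr a / e) *\<^sub>R hessV ((1/e) *\<^sub>R y) ((1/e) *\<^sub>R h))) = dforce a e y"
    by (intro ext) (simp add: dforce_def linear_scale[OF hessV_linear] power2_eq_square)
  ultimately show ?thesis by (simp add: force_def[abs_def])
qed

lemma force_bound: "0 < e \<Longrightarrow> norm (force a e y) \<le> C_grad * e powr a / e"
proof -
  assume e: "0 < e"
  have "norm (force a e y) = (e powr a / e) * norm (gradV ((1/e) *\<^sub>R y))" using e by (simp add: force_def)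
  also have "\<dots> \<le> (e powr a / e) * C_grad" using e by (intro mult_left_mono gradV_bound) auto
  finally show ?thesis by (simp add: mult_ac)
qed

lemma dforce_bound: "0 < e \<Longrightarrow> norm (dforce a e y h) \<le> C_hess * e powr a / e^2 * norm h"
proof -
  assume e: "0 < e"
  have "norm (dforce a e y h) = (e powr a / e^2) * norm (hessV ((1/e) *\<^sub>R y) h)"
    using e by (simp add: dforce_def)
  also have "\<dots> \<le> (e powr a / e^2) * (C_hess * norm h)" using e by (intro mult_left_mono hessV_bound) auto
  finally show ?thesis by (simp add: mult_ac)
qed

lemma dforce_lipschitz:
  "0 < e \<Longrightarrow> norm (dforce a e y h - dforce a e z h) \<le> C_lip * e powr a / e^3 * norm (y - z) * norm h"
proof -
  assume e: "0 < e"
  have "dforce a e y h - dforce a e z h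
      = - ((e powr a / e^2) *\<^sub>R (hessV ((1/e) *\<^sub>R y) h - hessV ((1/e) *\<^sub>R z) h))"
    by (simp add: dforce_def scaleR_diff_right)
  then have "norm (dforce a e y h - dforce a e z h)
      = (e powr a / e^2) * norm (hessV ((1/e) *\<^sub>R y) h - hessV ((1/e) *\<^sub>R z) h)"
    using e by simp
  also have "\<dots> \<le> (e powr a / e^2) * (C_lip * norm ((1/e) *\<^sub>R y - (1/e) *\<^sub>R z) * norm h)"
    using e by (intro mult_left_mono hessV_lipschitz) auto
  also have "norm ((1/e) *\<^sub>R y - (1/e) *\<^sub>R z) = norm (y - z) / e"
    using e by (simp flip: scaleR_diff_right)
  finally show ?thesis using e by (simp add: power2_eq_square power3_eq_cube field_simps)
qed

lemma force_taylor:
  "0 < e \<Longrightarrow> norm (force a e y - force a e z - dforce a e z (y - z)) \<le> C_lip * e powr a / e^3 * (norm (y - z))\<^sup>2"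
proof -
  assume e: "0 < e"
  let ?s = "\<lambda>w. (1/e) *\<^sub>R w"
  have lin: "hessV (?s z) (?s y - ?s z) = (1/e) *\<^sub>R hessV (?s z) (y - z)"
    by (simp add: linear_scale[OF hessV_linear] flip: scaleR_diff_right)
  have "force a e y - force a e z - dforce a e z (y - z)
      = - ((e powr a / e) *\<^sub>R (gradV (?s y) - gradV (?s z) - hessV (?s z) (?s y - ?s z)))"
    unfolding lin by (simp add: force_def dforce_def scaleR_diff_right power2_eq_square)
  then have "norm (force a e y - force a e z - dforce a e z (y - z))
      = (e powr a / e) * norm (gradV (?s y) - gradV (?s z) - hessV (?s z) (?s y - ?s z))"
    using e by simp
  also have "\<dots> \<le> (e powr a / e) * (C_lip * (norm (?s y - ?s z))\<^sup>2)"
    using e by (intro mult_left_mono gradV_taylor) auto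
  also have "norm (?s y - ?s z) = norm (y - z) / e"
    using e by (simp flip: scaleR_diff_right)
  finally show ?thesis using e by (simp add: power2_eq_square power3_eq_cube field_simps)
qed

lemma force_vanish: "0 < e \<Longrightarrow> norm y \<ge> e \<Longrightarrow> force a e y = 0"
  by (simp add: force_def gradV_vanish)

lemma dforce_vanish: "0 < e \<Longrightarrow> norm y \<ge> e \<Longrightarrow> dforce a e y h = 0"
  by (simp add: dforce_def hessV_vanish)

end


section \<open>Scattering by an abstract small force\<close>

locale small_force =
  fixes F :: "real^2 \<Rightarrow> real^2" and DF :: "real^2 \<Rightarrow> real^2 \<Rightarrow> real^2" and \<epsilon> k :: real
  assumes eps_pos: "0 < \<epsilon>" and k_pos: "0 < k" and k_small: "k \<le> 1/64"
    and F_deriv: "\<And>y. (F has_derivative DF y) (at y)"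
    and F_bound: "\<And>y. norm (F y) \<le> k/\<epsilon>"
    and DF_bound: "\<And>y h. norm (DF y h) \<le> k/\<epsilon>^2 * norm h"
    and DF_lip: "\<And>y z h. norm (DF y h - DF z h) \<le> k/\<epsilon>^3 * norm (y - z) * norm h"
    and F_taylor: "\<And>y z. norm (F y - F z - DF z (y - z)) \<le> k/\<epsilon>^3 * (norm (y - z))\<^sup>2"
    and F_vanish: "\<And>y. norm y \<ge> \<epsilon> \<Longrightarrow> F y = 0"
    and DF_vanish: "\<And>y h. norm y \<ge> \<epsilon> \<Longrightarrow> DF y h = 0"
begin

lemma F_continuous: "continuous_on UNIV F"
  using F_deriv has_derivative_continuous continuous_at_imp_continuous_on by blast

lemma F_lipschitz: "norm (F y - F z) \<le> k/\<epsilon>^2 * norm (y - z)"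
  by (rule lipschitz_from_derivative_bound[OF F_deriv DF_bound])

lemma DF_linear: "linear (DF y)"
  using F_deriv has_derivative_linear by blast

lemma DF_bounded_linear: "bounded_linear (DF y)"
  using F_deriv has_derivative_bounded_linear by blast

lemma DF_column_continuous: "continuous_on UNIV (\<lambda>y. DF y b)"
proof (rule lipschitz_on_continuous_on)
  show "(k/\<epsilon>^3 * norm b)-lipschitz_on UNIV (\<lambda>y. DF y b)"
  proof (rule lipschitz_onI)
    fix y z :: "real^2"
    show "dist (DF y b) (DF z b) \<le> k/\<epsilon>^3 * norm b * dist y z"
      using DF_lip[where y=y and z=z and h=b] by (simp add: dist_norm mult_ac)
  qed (use k_pos eps_pos in auto)
qed

lemma DF_basis_expansion: "DF y w = (\<Sum>b\<in>Basis. (w \<bullet> b) *\<^sub>R DF y b)"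
proof -
  have "DF y w = DF y (\<Sum>b\<in>Basis. (w \<bullet> b) *\<^sub>R b)" by (simp add: euclidean_representation)
  also have "\<dots> = (\<Sum>b\<in>Basis. (w \<bullet> b) *\<^sub>R DF y b)"
    using DF_linear by (simp add: linear_sum linear_scale)
  finally show ?thesis .
qed

lemma DF_compose_continuous:
  assumes "continuous_on S g" "continuous_on S h"
  shows "continuous_on S (\<lambda>t. DF (g t) (h t))"
proof -
  have "continuous_on S (\<lambda>t. \<Sum>b\<in>Basis. (h t \<bullet> b) *\<^sub>R DF (g t) b)"
    by (intro continuous_on_sum continuous_intros assms
        continuous_on_compose2[OF DF_column_continuous assms(1)]) auto
  then show ?thesis by (subst DF_basis_expansion) simp
qed

end

locale scattering = small_force +
  fixes xm vm :: "real^2" and x v :: "real \<Rightarrow> real^2" and \<tau> :: real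
  assumes xm_norm: "norm xm = \<epsilon>" and vm_norm: "norm vm = 1" and tau_pos: "0 < \<tau>"
    and x_init: "x 0 = xm" and v_init: "v 0 = vm"
    and x_deriv: "\<forall>t\<in>{0..\<tau>}. (x has_vector_derivative v t) (at t within {0..\<tau>})"
    and v_deriv: "\<forall>t\<in>{0..\<tau>}. (v has_vector_derivative F (x t)) (at t within {0..\<tau>})"
    and inside: "\<forall>t\<in>{0<..<\<tau>}. norm (x t) < \<epsilon>"
    and x_exit: "norm (x \<tau>) = \<epsilon>"
begin

definition line :: "real \<Rightarrow> real^2" where "line t = xm + t *\<^sub>R vm"
definition th :: real where "th = - 2 * (xm \<bullet> vm)"

definition fline :: "real \<Rightarrow> real^2" where "fline t = F (line t)"
definition impulse :: "real \<Rightarrow> real^2" where "impulse t = integral {0..t} fline"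
definition moment :: "real \<Rightarrow> real^2" where "moment t = integral {0..t} (\<lambda>u. u *\<^sub>R fline u)"
definition drift :: "real \<Rightarrow> real^2" where
  "drift t = integral {0..t} (\<lambda>u. (t - u) *\<^sub>R fline u)"

definition dcorr :: "real \<Rightarrow> real^2" where "dcorr t = DF (line t) (drift t)"

text \<open>All relevant times lie in \<open>[0, Tmax]\<close>.\<close>
definition Tmax :: real where "Tmax = 4 * \<epsilon>"

lemma line_has_derivative: "(line has_vector_derivative vm) (at t within S)"
  unfolding line_def[abs_def] by (auto intro!: derivative_eq_intros)

lemma fline_continuous: "continuous_on S fline"
  unfolding fline_def[abs_def] line_def
  by (intro continuous_on_compose2[OF F_continuous] continuous_intros) auto

text \<open>The impact parameter enters only through \<open>xm \<bullet> vm \<in> [-\<epsilon>, \<epsilon>]\<close>.\<close>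
lemma xm_vm_bound: "\<bar>xm \<bullet> vm\<bar> \<le> \<epsilon>"
  using Cauchy_Schwarz_ineq2[of xm vm] xm_norm vm_norm by simp

subsection \<open>Zeroth order: the trajectory stays close to the line\<close>

lemma velocity_deviation: "t \<in> {0..\<tau>} \<Longrightarrow> norm (v t - vm) \<le> k/\<epsilon> * t"
  using vector_mvt_bound[of 0 t "{0..\<tau>}" v "\<lambda>s. F (x s)" "k/\<epsilon>"] x_deriv v_deriv F_bound v_init
  by auto

lemma position_deviation: "t \<in> {0..\<tau>} \<Longrightarrow> norm (x t - line t) \<le> k/\<epsilon> * t^2"
proof -
  assume t: "t \<in> {0..\<tau>}"
  have "norm ((x t - line t) - (x 0 - line 0)) \<le> (k/\<epsilon> * t) * (t - 0)"
  proof (rule vector_mvt_bound[where S="{0..\<tau>}" and f'="\<lambda>s. v s - vm"])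
    fix s assume s: "s \<in> {0..t}"
    then have s': "s \<in> {0..\<tau>}" using t by auto
    show "((\<lambda>s. x s - line s) has_vector_derivative v s - vm) (at s within {0..\<tau>})"
      using x_deriv s' line_has_derivative by (intro has_vector_derivative_diff) auto
    have "norm (v s - vm) \<le> k/\<epsilon> * s" using velocity_deviation[OF s'] .
    also have "\<dots> \<le> k/\<epsilon> * t" using s eps_pos k_pos by (intro mult_left_mono) auto
    finally show "norm (v s - vm) \<le> k/\<epsilon> * t" .
  qed (use t in auto)
  then show ?thesis using x_init by (simp add: line_def power2_eq_square mult_ac)
qed

text \<open>The crossing cannot last longer than \<open>4\<epsilon>\<close>: at that time the trajectory would
  already have travelled more than \<open>2\<epsilon>\<close> along \<open>vm\<close>.\<close>
lemma tau_le: "\<tau> \<le> 4 * \<epsilon>"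
proof (rule ccontr)
  assume "\<not> \<tau> \<le> 4 * \<epsilon>"
  then have t: "4 * \<epsilon> \<in> {0<..<\<tau>}" "4 * \<epsilon> \<in> {0..\<tau>}" using eps_pos by auto
  have "norm (x (4*\<epsilon>) - line (4*\<epsilon>)) \<le> k/\<epsilon> * (4*\<epsilon>)^2" by (rule position_deviation[OF t(2)])
  also have "\<dots> = 16 * k * \<epsilon>" using eps_pos by (simp add: power2_eq_square)
  finally have dev: "norm (x (4*\<epsilon>) - line (4*\<epsilon>)) \<le> 16 * k * \<epsilon>" .
  have "\<bar>(x (4*\<epsilon>) - line (4*\<epsilon>)) \<bullet> vm\<bar> \<le> norm (x (4*\<epsilon>) - line (4*\<epsilon>))"
    using Cauchy_Schwarz_ineq2[of "x (4*\<epsilon>) - line (4*\<epsilon>)" vm] vm_norm by simp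
  moreover have "line (4*\<epsilon>) \<bullet> vm = xm \<bullet> vm + 4 * \<epsilon>"
    using vm_norm
    by (simp add: line_def inner_add_left inner_commute[of vm vm] power2_norm_eq_inner[symmetric])
  moreover have "\<bar>x (4*\<epsilon>) \<bullet> vm\<bar> \<le> norm (x (4*\<epsilon>))"
    using Cauchy_Schwarz_ineq2[of "x (4*\<epsilon>)" vm] vm_norm by simp
  moreover have "norm (x (4*\<epsilon>)) < \<epsilon>" using inside t(1) by blast
  moreover have "16 * k * \<epsilon> \<le> \<epsilon> / 4" using k_small eps_pos by simp
  ultimately show False using xm_vm_bound dev by (simp add: inner_diff_left)
qed

lemma th_le: "th \<le> 2 * \<epsilon>"
  using xm_vm_bound by (simp add: th_def)

lemma tau_Tmax: "\<tau> \<le> Tmax" and th_Tmax: "th \<le> Tmax"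
  using tau_le th_le eps_pos by (auto simp: Tmax_def)

lemma line_norm_sq: "(norm (line t))\<^sup>2 = \<epsilon>^2 + t * (t - th)"
proof -
  have "(norm (line t))\<^sup>2 = line t \<bullet> line t" by (simp add: power2_norm_eq_inner)
  also have "\<dots> = xm \<bullet> xm + 2 * t * (xm \<bullet> vm) + t^2 * (vm \<bullet> vm)"
    by (simp add: line_def inner_add_left inner_add_right inner_commute power2_eq_square algebra_simps)
  also have "\<dots> = \<epsilon>^2 + t * (t - th)"
    using xm_norm vm_norm
    by (simp add: th_def power2_norm_eq_inner[symmetric] algebra_simps power2_eq_square)
  finally show ?thesis .
qed

lemma line_exit_norm: "norm (line th) = \<epsilon>"
  using line_norm_sq[of th] eps_pos norm_ge_zero[of "line th"] by (simp add: power2_eq_iff)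

lemma line_dist: "norm (line t - line th) = \<bar>t - th\<bar>"
  using vm_norm by (simp add: line_def flip: scaleR_diff_left)

text \<open>Exit time estimate, relative form: from \<open>|x(\<tau>)| = \<epsilon>\<close> and \<open>|x(\<tau>) - line \<tau>| = O(k\<tau>\<^sup>2/\<epsilon>)\<close>
  one gets \<open>\<tau> |\<tau> - th| = O(k\<tau>\<^sup>2)\<close>.\<close>
lemma tau_rel_error: "\<bar>\<tau> - th\<bar> \<le> 11 * k * \<tau>"
proof -
  define d where "d = x \<tau> - line \<tau>"
  have dn: "norm d \<le> k/\<epsilon> * \<tau>^2" unfolding d_def by (rule position_deviation) (use tau_pos in auto)
  have line_tau: "norm (line \<tau>) \<le> 5 * \<epsilon>"
    using norm_triangle_ineq[of xm "\<tau> *\<^sub>R vm"] xm_norm vm_norm tau_le tau_pos by (simp add: line_def)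
  have "\<epsilon>^2 = (norm (line \<tau> + d))\<^sup>2" using x_exit by (simp add: d_def)
  also have "\<dots> = (norm (line \<tau>))\<^sup>2 + 2 * (line \<tau> \<bullet> d) + (norm d)\<^sup>2"
    by (simp add: power2_norm_eq_inner inner_add_left inner_add_right inner_commute[of d "line \<tau>"])
  finally have eq: "\<tau> * (\<tau> - th) = - (2 * (line \<tau> \<bullet> d) + (norm d)\<^sup>2)"
    using line_norm_sq[of \<tau>] by simp
  have "\<bar>2 * (line \<tau> \<bullet> d)\<bar> \<le> 2 * (norm (line \<tau>) * norm d)"
    using Cauchy_Schwarz_ineq2[of "line \<tau>" d] by simp
  also have "\<dots> \<le> 2 * ((5 * \<epsilon>) * (k/\<epsilon> * \<tau>^2))"
    using line_tau dn eps_pos by (intro mult_left_mono mult_mono) auto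
  also have "\<dots> = 10 * k * \<tau>^2" using eps_pos by simp
  finally have cross: "\<bar>2 * (line \<tau> \<bullet> d)\<bar> \<le> 10 * k * \<tau>^2" .
  have "k/\<epsilon> * \<tau>^2 \<le> k/\<epsilon> * (\<tau> * (4*\<epsilon>))"
    using tau_le tau_pos k_pos eps_pos by (intro mult_left_mono) (auto simp: power2_eq_square)
  also have "\<dots> = 4 * k * \<tau>" using eps_pos by simp
  finally have "norm d \<le> 4 * k * \<tau>" using dn by linarith
  then have "(norm d)\<^sup>2 \<le> (4 * k * \<tau>)^2" by (intro power_mono) auto
  also have "\<dots> = (16 * k) * (k * \<tau>^2)" by (simp add: power2_eq_square)
  also have "\<dots> \<le> 1 * (k * \<tau>^2)" using k_small k_pos by (intro mult_right_mono) auto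
  finally have quad: "(norm d)\<^sup>2 \<le> k * \<tau>^2" by simp
  have "\<bar>\<tau> * (\<tau> - th)\<bar> \<le> 11 * k * \<tau>^2"
    unfolding abs_le_iff using eq cross[unfolded abs_le_iff] quad zero_le_power2[of "norm d"] by linarith
  then have "\<tau> * \<bar>\<tau> - th\<bar> \<le> 11 * k * \<tau>^2" using tau_pos by (simp add: abs_mult)
  then show ?thesis using tau_pos by (simp add: power2_eq_square)
qed

lemma tau_error: "\<bar>\<tau> - th\<bar> \<le> 44 * k * \<epsilon>"
proof -
  have "11 * k * \<tau> \<le> 11 * k * (4 * \<epsilon>)" using tau_le k_pos by (intro mult_left_mono) auto
  then show ?thesis using tau_rel_error by linarith
qed

text \<open>In particular the free line really crosses the ball (the trajectory is not
  tangent).\<close>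
lemma th_pos: "0 < th"
proof -
  have "11 * k * \<tau> < \<tau>" using k_small tau_pos by simp
  then show ?thesis using tau_rel_error by linarith
qed

lemma near_exit_times:
  "min \<tau> th \<le> t \<Longrightarrow> t \<le> max \<tau> th \<Longrightarrow> \<bar>t - th\<bar> \<le> 44 * k * \<epsilon> \<and> 0 \<le> t \<and> t \<le> Tmax"
  using tau_error th_pos tau_pos tau_Tmax th_Tmax
  by (auto simp: abs_le_iff min_def max_def split: if_splits)

subsection \<open>First order: impulse and drift along the line\<close>

lemma impulse_bound: "norm (impulse th) \<le> 2 * k"
proof -
  have "norm (impulse th) \<le> k/\<epsilon> * (th - 0)"
    unfolding impulse_def
    by (rule integral_bound) (use th_pos fline_continuous F_bound in \<open>auto simp: fline_def\<close>)
  also have "\<dots> \<le> k/\<epsilon> * (2 * \<epsilon>)" using th_le k_pos eps_pos by (intro mult_left_mono) auto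
  finally show ?thesis using eps_pos by simp
qed

text \<open>Splitting the drift into antiderivatives, to differentiate it in \<open>t\<close>.\<close>
lemma drift_eq: "drift t = t *\<^sub>R impulse t - moment t"
proof -
  have i1: "fline integrable_on {0..t}" by (rule integrable_continuous_real[OF fline_continuous])
  have i2: "(\<lambda>u. u *\<^sub>R fline u) integrable_on {0..t}"
    by (intro integrable_continuous_real continuous_intros fline_continuous)
  have "drift t = integral {0..t} (\<lambda>u. t *\<^sub>R fline u - u *\<^sub>R fline u)"
    by (simp add: drift_def scaleR_diff_left)
  also have "\<dots> = integral {0..t} (\<lambda>u. t *\<^sub>R fline u) - integral {0..t} (\<lambda>u. u *\<^sub>R fline u)"
    by (rule integral_diff[OF integrable_cmul[OF i1] i2])
  finally show ?thesis by (simp add: impulse_def moment_def)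
qed

lemma impulse_has_derivative:
  "t \<in> {0..Tmax} \<Longrightarrow> (impulse has_vector_derivative fline t) (at t within {0..Tmax})"
  unfolding impulse_def[abs_def] by (rule integral_has_vector_derivative[OF fline_continuous])

lemma moment_has_derivative:
  "t \<in> {0..Tmax} \<Longrightarrow> (moment has_vector_derivative t *\<^sub>R fline t) (at t within {0..Tmax})"
  unfolding moment_def[abs_def]
  by (rule integral_has_vector_derivative[of _ _ "\<lambda>u. u *\<^sub>R fline u"])
     (auto intro!: continuous_intros fline_continuous)

lemma drift_has_derivative:
  "t \<in> {0..Tmax} \<Longrightarrow> (drift has_vector_derivative impulse t) (at t within {0..Tmax})"
proof -
  assume t: "t \<in> {0..Tmax}"
  have "((\<lambda>t. t *\<^sub>R impulse t - moment t) has_vector_derivative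
          (t *\<^sub>R fline t + 1 *\<^sub>R impulse t - t *\<^sub>R fline t)) (at t within {0..Tmax})"
    by (intro has_vector_derivative_diff has_vector_derivative_scaleR
        impulse_has_derivative[OF t] moment_has_derivative[OF t])
       (auto intro!: derivative_eq_intros)
  moreover have "(\<lambda>t. t *\<^sub>R impulse t - moment t) = drift" by (intro ext) (simp add: drift_eq)
  ultimately show ?thesis by simp
qed

lemma drift_continuous: "continuous_on {0..Tmax} drift"
  using drift_has_derivative has_vector_derivative_continuous continuous_on_eq_continuous_within
  by blast

lemma drift_bound: "0 \<le> t \<Longrightarrow> norm (drift t) \<le> k/\<epsilon> * t^2"
proof -
  assume t: "0 \<le> t"
  have "norm (drift t) \<le> (t * (k/\<epsilon>)) * (t - 0)"
    unfolding drift_def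
  proof (rule integral_bound)
    show "continuous_on {0..t} (\<lambda>u. (t - u) *\<^sub>R fline u)" by (intro continuous_intros fline_continuous)
    fix u assume u: "u \<in> {0..t}"
    have "norm ((t - u) *\<^sub>R fline u) = (t - u) * norm (fline u)" using u by simp
    also have "\<dots> \<le> t * (k/\<epsilon>)"
      using u F_bound[of "line u"] t by (intro mult_mono) (auto simp: fline_def)
    finally show "norm ((t - u) *\<^sub>R fline u) \<le> t * (k/\<epsilon>)" .
  qed (use t in auto)
  then show ?thesis by (simp add: power2_eq_square mult_ac)
qed

lemma drift_bound_Tmax: "t \<in> {0..Tmax} \<Longrightarrow> norm (drift t) \<le> 16 * k * \<epsilon>"
proof -
  assume t: "t \<in> {0..Tmax}"
  have "norm (drift t) \<le> k/\<epsilon> * t^2" using t by (intro drift_bound) auto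
  also have "\<dots> \<le> k/\<epsilon> * (4 * \<epsilon>)^2"
    using t k_pos eps_pos by (intro mult_left_mono power_mono) (auto simp: Tmax_def)
  also have "\<dots> = 16 * k * \<epsilon>" using eps_pos by (simp add: power2_eq_square)
  finally show ?thesis .
qed

lemma impulse_0: "impulse 0 = 0" and drift_0: "drift 0 = 0"
  by (simp_all add: impulse_def drift_def)

lemma velocity_first_order: "t \<in> {0..\<tau>} \<Longrightarrow> norm (v t - vm - impulse t) \<le> 16 * k^2/\<epsilon> * t"
proof -
  assume t: "t \<in> {0..\<tau>}"
  have "norm ((v t - vm - impulse t) - (v 0 - vm - impulse 0)) \<le> (16 * k^2/\<epsilon>) * (t - 0)"
  proof (rule vector_mvt_bound[where S="{0..\<tau>}" and f'="\<lambda>s. F (x s) - fline s"])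
    fix s assume s: "s \<in> {0..t}"
    then have s': "s \<in> {0..\<tau>}" and s'': "s \<in> {0..Tmax}" using t tau_Tmax by auto
    have "(impulse has_vector_derivative fline s) (at s within {0..\<tau>})"
      by (rule has_vector_derivative_within_subset[OF impulse_has_derivative[OF s'']])
         (use tau_Tmax in auto)
    then show "((\<lambda>s. v s - vm - impulse s) has_vector_derivative F (x s) - fline s) (at s within {0..\<tau>})"
      using v_deriv s' by (auto intro!: derivative_eq_intros)
    have "norm (F (x s) - fline s) \<le> k/\<epsilon>^2 * norm (x s - line s)"
      unfolding fline_def by (rule F_lipschitz)
    also have "\<dots> \<le> k/\<epsilon>^2 * (k/\<epsilon> * s^2)"
      using position_deviation[OF s'] k_pos eps_pos by (intro mult_left_mono) auto
    also have "\<dots> \<le> k/\<epsilon>^2 * (k/\<epsilon> * (4*\<epsilon>)^2)"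
      using s' tau_le k_pos eps_pos by (intro mult_left_mono power_mono) auto
    also have "\<dots> = 16 * k^2/\<epsilon>" using eps_pos by (simp add: power2_eq_square field_simps)
    finally show "norm (F (x s) - fline s) \<le> 16 * k^2/\<epsilon>" .
  qed (use t in auto)
  then show ?thesis using v_init by (simp add: impulse_0)
qed

lemma position_first_order: "t \<in> {0..\<tau>} \<Longrightarrow> norm (x t - line t - drift t) \<le> 256 * k^2 * \<epsilon>"
proof -
  assume t: "t \<in> {0..\<tau>}"
  have "norm ((x t - line t - drift t) - (x 0 - line 0 - drift 0)) \<le> (64 * k^2) * (t - 0)"
  proof (rule vector_mvt_bound[where S="{0..\<tau>}" and f'="\<lambda>s. v s - vm - impulse s"])
    fix s assume s: "s \<in> {0..t}"
    then have s': "s \<in> {0..\<tau>}" and s'': "s \<in> {0..Tmax}" using t tau_Tmax by auto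
    have "(drift has_vector_derivative impulse s) (at s within {0..\<tau>})"
      by (rule has_vector_derivative_within_subset[OF drift_has_derivative[OF s'']])
         (use tau_Tmax in auto)
    then show "((\<lambda>s. x s - line s - drift s) has_vector_derivative v s - vm - impulse s) (at s within {0..\<tau>})"
      using x_deriv s' line_has_derivative by (auto intro!: has_vector_derivative_diff)
    have "norm (v s - vm - impulse s) \<le> 16 * k^2/\<epsilon> * s" by (rule velocity_first_order[OF s'])
    also have "\<dots> \<le> 16 * k^2/\<epsilon> * (4 * \<epsilon>)"
      using s' tau_le k_pos eps_pos by (intro mult_left_mono) auto
    also have "\<dots> = 64 * k^2" using eps_pos by simp
    finally show "norm (v s - vm - impulse s) \<le> 64 * k^2" .
  qed (use t in auto)
  then have "norm (x t - line t - drift t) \<le> 64 * k^2 * t" using x_init by (simp add: drift_0 line_def)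
  also have "\<dots> \<le> 64 * k^2 * (4 * \<epsilon>)" using t tau_le by (intro mult_left_mono) auto
  finally show ?thesis by simp
qed

subsection \<open>Second order: the velocity change up to \<open>O(k\<^sup>3)\<close>\<close>

lemma dcorr_continuous: "continuous_on {0..Tmax} dcorr"
proof -
  have "continuous_on {0..Tmax} line"
    unfolding line_def[abs_def] by (intro continuous_intros)
  then show ?thesis
    unfolding dcorr_def[abs_def] by (rule DF_compose_continuous[OF _ drift_continuous])
qed

text \<open>Since \<open>F\<close> and \<open>DF\<close> vanish at the exit point \<open>line th\<close>, the integrands are small
  near \<open>th\<close>: this controls the error from integrating up to \<open>\<tau>\<close> instead of \<open>th\<close>.\<close>
lemma fline_near_exit: "norm (fline t) \<le> k/\<epsilon>^3 * (t - th)^2"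
proof -
  have "fline t = F (line t) - F (line th) - DF (line th) (line t - line th)"
    using F_vanish DF_vanish line_exit_norm by (simp add: fline_def)
  then have "norm (fline t) \<le> k/\<epsilon>^3 * (norm (line t - line th))\<^sup>2" using F_taylor by simp
  then show ?thesis using line_dist by simp
qed

lemma dcorr_near_exit: "norm (dcorr t) \<le> k/\<epsilon>^3 * \<bar>t - th\<bar> * norm (drift t)"
proof -
  have "dcorr t = DF (line t) (drift t) - DF (line th) (drift t)"
    using DF_vanish line_exit_norm by (simp add: dcorr_def)
  then have "norm (dcorr t) \<le> k/\<epsilon>^3 * norm (line t - line th) * norm (drift t)" using DF_lip by simp
  then show ?thesis using line_dist by simp
qed

text \<open>Second order expansion of the velocity at the true exit time \<open>\<tau>\<close>: the force
  along the trajectory is \<open>fline + dcorr\<close> up to \<open>O(k\<^sup>3/\<epsilon>)\<close>, by Taylor expansion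
  of \<open>F\<close> around the line and the first order position estimate.\<close>
lemma expansion_at_tau:
  "norm (v \<tau> - vm - integral {0..\<tau>} fline - integral {0..\<tau>} dcorr) \<le> 2048 * k^3"
proof -
  have ifl: "fline integrable_on {0..\<tau>}" by (rule integrable_continuous_real[OF fline_continuous])
  have idc: "dcorr integrable_on {0..\<tau>}"
    by (rule integrable_continuous_real[OF continuous_on_subset[OF dcorr_continuous]])
       (use tau_Tmax in auto)
  have FTC: "((\<lambda>t. F (x t)) has_integral (v \<tau> - vm)) {0..\<tau>}"
    using fundamental_theorem_of_calculus[of 0 \<tau> v "\<lambda>t. F (x t)"] v_deriv tau_pos v_init by auto
  have HI: "((\<lambda>t. F (x t) - fline t - dcorr t) has_integral
              (v \<tau> - vm - integral {0..\<tau>} fline - integral {0..\<tau>} dcorr)) (cbox 0 \<tau>)"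
    using has_integral_diff[OF has_integral_diff[OF FTC integrable_integral[OF ifl]]
        integrable_integral[OF idc]]
    by simp
  have "norm (v \<tau> - vm - integral {0..\<tau>} fline - integral {0..\<tau>} dcorr)
      \<le> (512 * k^3/\<epsilon>) * Henstock_Kurzweil_Integration.content (cbox 0 \<tau>)"
  proof (rule has_integral_bound[OF _ HI])
    show "0 \<le> 512 * k^3/\<epsilon>" using k_pos eps_pos by simp
    fix t assume "t \<in> cbox 0 \<tau>"
    then have t: "t \<in> {0..\<tau>}" by simp
    define dl where "dl = x t - line t"
    define e where "e = dl - drift t"
    have split: "F (x t) - fline t - dcorr t = (F (x t) - F (line t) - DF (line t) dl) + DF (line t) e"
      unfolding e_def dcorr_def fline_def using DF_linear[of "line t"] by (simp add: linear_diff dl_def)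
    have "norm dl \<le> k/\<epsilon> * t^2" unfolding dl_def by (rule position_deviation[OF t])
    also have "\<dots> \<le> k/\<epsilon> * (4*\<epsilon>)^2" using t tau_le k_pos eps_pos by (intro mult_left_mono power_mono) auto
    also have "\<dots> = 16 * k * \<epsilon>" using eps_pos by (simp add: power2_eq_square)
    finally have dl_bound: "norm dl \<le> 16 * k * \<epsilon>" .
    have "norm (F (x t) - F (line t) - DF (line t) dl) \<le> k/\<epsilon>^3 * (norm dl)^2"
      using F_taylor[of "x t" "line t"] by (simp add: dl_def)
    also have "\<dots> \<le> k/\<epsilon>^3 * (16 * k * \<epsilon>)^2"
      using dl_bound k_pos eps_pos by (intro mult_left_mono power_mono) auto
    also have "\<dots> = 256 * k^3/\<epsilon>" using eps_pos by (simp add: power2_eq_square power3_eq_cube field_simps)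
    finally have taylor: "norm (F (x t) - F (line t) - DF (line t) dl) \<le> 256 * k^3/\<epsilon>" .
    have "norm (DF (line t) e) \<le> k/\<epsilon>^2 * norm e" by (rule DF_bound)
    also have "\<dots> \<le> k/\<epsilon>^2 * (256 * k^2 * \<epsilon>)"
      using position_first_order[OF t] k_pos eps_pos by (intro mult_left_mono) (auto simp: e_def dl_def)
    also have "\<dots> = 256 * k^3/\<epsilon>" using eps_pos by (simp add: power2_eq_square power3_eq_cube field_simps)
    finally have linear: "norm (DF (line t) e) \<le> 256 * k^3/\<epsilon>" .
    show "norm (F (x t) - fline t - dcorr t) \<le> 512 * k^3/\<epsilon>"
      unfolding split using norm_triangle_ineq[of "F (x t) - F (line t) - DF (line t) dl" "DF (line t) e"]
        taylor linear by simp
  qed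
  also have "\<dots> = (512 * k^3/\<epsilon>) * \<tau>" using tau_pos by simp
  also have "\<dots> \<le> (512 * k^3/\<epsilon>) * (4 * \<epsilon>)" using tau_le k_pos eps_pos by (intro mult_left_mono) auto
  also have "\<dots> = 2048 * k^3" using eps_pos by simp
  finally show ?thesis .
qed

lemma fline_integral_shift: "norm (integral {0..\<tau>} fline - integral {0..th} fline) \<le> 1331 * k^3"
proof -
  have "norm (integral {0..\<tau>} fline - integral {0..th} fline) \<le> (k/\<epsilon>^3 * (44 * k * \<epsilon>)^2) * \<bar>\<tau> - th\<bar>"
  proof (rule integral_upper_limit_diff)
    fix t assume "min \<tau> th \<le> t" "t \<le> max \<tau> th"
    then have t: "\<bar>t - th\<bar> \<le> 44 * k * \<epsilon>" using near_exit_times by blast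
    have "norm (fline t) \<le> k/\<epsilon>^3 * (t - th)^2" by (rule fline_near_exit)
    also have "\<dots> \<le> k/\<epsilon>^3 * (44 * k * \<epsilon>)^2"
      using t k_pos eps_pos by (intro mult_left_mono) (auto simp: power2_le_iff_abs_le)
    finally show "norm (fline t) \<le> k/\<epsilon>^3 * (44 * k * \<epsilon>)^2" .
  qed (use tau_pos th_pos fline_continuous in auto)
  also have "\<dots> \<le> (k/\<epsilon>^3 * (44 * k * \<epsilon>)^2) * (44 * k * \<epsilon>)"
    using tau_error k_pos eps_pos by (intro mult_left_mono) auto
  also have "\<dots> = 85184 * k^4"
    using eps_pos by (simp add: power2_eq_square power3_eq_cube field_simps eval_nat_numeral)
  also have "\<dots> \<le> (85184/64) * k^3" by (rule quartic_le_cubic) (use k_pos k_small in auto)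
  finally show ?thesis by simp
qed

lemma dcorr_integral_shift: "norm (integral {0..\<tau>} dcorr - integral {0..th} dcorr) \<le> 484 * k^3"
proof -
  have "norm (integral {0..\<tau>} dcorr - integral {0..th} dcorr)
      \<le> (k/\<epsilon>^3 * (44 * k * \<epsilon>) * (16 * k * \<epsilon>)) * \<bar>\<tau> - th\<bar>"
  proof (rule integral_upper_limit_diff)
    fix t assume "min \<tau> th \<le> t" "t \<le> max \<tau> th"
    then have t: "\<bar>t - th\<bar> \<le> 44 * k * \<epsilon>" "t \<in> {0..Tmax}" using near_exit_times by auto
    have "norm (dcorr t) \<le> k/\<epsilon>^3 * \<bar>t - th\<bar> * norm (drift t)" by (rule dcorr_near_exit)
    also have "\<dots> \<le> k/\<epsilon>^3 * (44 * k * \<epsilon>) * (16 * k * \<epsilon>)"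
      using t drift_bound_Tmax[OF t(2)] k_pos eps_pos by (intro mult_mono mult_left_mono) auto
    finally show "norm (dcorr t) \<le> k/\<epsilon>^3 * (44 * k * \<epsilon>) * (16 * k * \<epsilon>)" .
  qed (use tau_pos th_pos continuous_on_subset[OF dcorr_continuous] tau_Tmax th_Tmax in auto)
  also have "\<dots> \<le> (k/\<epsilon>^3 * (44 * k * \<epsilon>) * (16 * k * \<epsilon>)) * (44 * k * \<epsilon>)"
    using tau_error k_pos eps_pos by (intro mult_left_mono) auto
  also have "\<dots> = 30976 * k^4"
    using eps_pos by (simp add: power2_eq_square power3_eq_cube field_simps eval_nat_numeral)
  also have "\<dots> \<le> (30976/64) * k^3" by (rule quartic_le_cubic) (use k_pos k_small in auto)
  finally show ?thesis by simp
qed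

lemma dcorr_integral_bound: "norm (integral {0..th} dcorr) \<le> 8 * k^2"
proof -
  have "norm (integral {0..th} dcorr) \<le> (4 * k^2/\<epsilon>) * (th - 0)"
  proof (rule integral_bound)
    show "continuous_on {0..th} dcorr"
      by (rule continuous_on_subset[OF dcorr_continuous]) (use th_Tmax in auto)
    fix s assume s: "s \<in> {0..th}"
    have "norm (dcorr s) \<le> k/\<epsilon>^2 * norm (drift s)" unfolding dcorr_def by (rule DF_bound)
    also have "\<dots> \<le> k/\<epsilon>^2 * (k/\<epsilon> * s^2)"
      using drift_bound[of s] s k_pos eps_pos by (intro mult_left_mono) auto
    also have "\<dots> \<le> k/\<epsilon>^2 * (k/\<epsilon> * (2 * \<epsilon>)^2)"
      using s th_le k_pos eps_pos by (intro mult_left_mono power_mono) auto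
    also have "\<dots> = 4 * k^2/\<epsilon>" using eps_pos by (simp add: power2_eq_square field_simps)
    finally show "norm (dcorr s) \<le> 4 * k^2/\<epsilon>" .
  qed (use th_pos in auto)
  also have "\<dots> \<le> (4 * k^2/\<epsilon>) * (2 * \<epsilon>)" using th_le k_pos eps_pos by (intro mult_left_mono) auto
  also have "\<dots> = 8 * k^2" using eps_pos by simp
  finally show ?thesis .
qed

lemma velocity_second_order:
  "norm (v \<tau> - vm - impulse th - integral {0..th} dcorr) \<le> 4000 * k^3"
proof -
  let ?A = "v \<tau> - vm - integral {0..\<tau>} fline - integral {0..\<tau>} dcorr"
  let ?B = "integral {0..\<tau>} fline - integral {0..th} fline"
  let ?C = "integral {0..\<tau>} dcorr - integral {0..th} dcorr"
  have regroup: "a - b - c - d = (a - b - e - f) + (e - c) + (f - d)" for a b c d e f :: "real^2"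
    by (simp add: algebra_simps)
  have split: "v \<tau> - vm - impulse th - integral {0..th} dcorr = ?A + ?B + ?C"
    unfolding impulse_def by (rule regroup)
  have "norm (v \<tau> - vm - impulse th - integral {0..th} dcorr) \<le> norm (?A + ?B) + norm ?C"
    unfolding split by (rule norm_triangle_ineq)
  also have "\<dots> \<le> norm ?A + norm ?B + norm ?C"
    using norm_triangle_ineq[of ?A ?B] by simp
  also have "\<dots> \<le> 2048 * k^3 + 1331 * k^3 + 484 * k^3"
    using expansion_at_tau fline_integral_shift dcorr_integral_shift by linarith
  also have "\<dots> \<le> 4000 * k^3" using k_pos by simp
  finally show ?thesis .
qed

lemma velocity_change_bound: "norm (v \<tau> - vm) \<le> 4 * k"
proof -
  have "norm (v \<tau> - vm) \<le> k/\<epsilon> * \<tau>" using velocity_deviation tau_pos by auto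
  also have "\<dots> \<le> k/\<epsilon> * (4 * \<epsilon>)" using tau_le k_pos eps_pos by (intro mult_left_mono) auto
  finally show ?thesis using eps_pos by simp
qed

lemma dcorr_integral_eq:
  "integral {0..th} dcorr
   = integral {0..th} (\<lambda>s. integral {0..s} (\<lambda>u. (s - u) *\<^sub>R DF (xm + s *\<^sub>R vm) (F (xm + u *\<^sub>R vm))))"
proof (rule integral_cong)
  fix s
  have "integral {0..s} (DF (line s) \<circ> (\<lambda>u. (s - u) *\<^sub>R fline u))
      = DF (line s) (integral {0..s} (\<lambda>u. (s - u) *\<^sub>R fline u))"
    by (rule integral_linear[OF _ DF_bounded_linear])
       (intro integrable_continuous_real continuous_intros fline_continuous)
  moreover have "DF (line s) \<circ> (\<lambda>u. (s - u) *\<^sub>R fline u)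
      = (\<lambda>u. (s - u) *\<^sub>R DF (xm + s *\<^sub>R vm) (F (xm + u *\<^sub>R vm)))"
    by (simp add: o_def linear_scale[OF DF_linear] fline_def line_def)
  ultimately show "dcorr s = integral {0..s} (\<lambda>u. (s - u) *\<^sub>R DF (xm + s *\<^sub>R vm) (F (xm + u *\<^sub>R vm)))"
    by (simp add: dcorr_def drift_def)
qed

lemma impulse_eq: "impulse th = integral {0..th} (\<lambda>s. F (xm + s *\<^sub>R vm))"
  by (simp add: impulse_def fline_def[abs_def] line_def)

end


section \<open>The obstacle force: symmetry and smallness\<close>

context profile
begin

lemma Veps_radial:
  assumes "radial2 V" "norm y = norm z"
  shows "Veps V a e y = Veps V a e z"
  using assms unfolding radial2_def Veps_def by simp

lemma force_continuous: "continuous_on UNIV (force a e)"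
  by (intro continuous_at_imp_continuous_on ballI has_derivative_continuous[OF force_has_derivative])

lemma Veps_path_derivative:
  assumes "(p has_vector_derivative w) (at t within S)"
  shows "((\<lambda>t. Veps V a e (p t)) has_vector_derivative - (force a e (p t) \<bullet> w)) (at t within S)"
proof -
  have "(p has_derivative (\<lambda>h. h *\<^sub>R w)) (at t within S)"
    using assms by (simp add: has_vector_derivative_def)
  from has_derivative_compose[OF this Veps_has_derivative]
  have "((\<lambda>t. Veps V a e (p t)) has_derivative
          (\<lambda>h. ((e powr a / e) *\<^sub>R gradV ((1/e) *\<^sub>R p t)) \<bullet> (h *\<^sub>R w))) (at t within S)" .
  moreover have "(\<lambda>h. ((e powr a / e) *\<^sub>R gradV ((1/e) *\<^sub>R p t)) \<bullet> (h *\<^sub>R w))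
                 = (\<lambda>h. h *\<^sub>R - (force a e (p t) \<bullet> w))"
    by (intro ext) (simp add: force_def)
  ultimately show ?thesis by (simp add: has_vector_derivative_def)
qed

text \<open>Conservation of energy \<open>V(x) + |v|\<^sup>2/2\<close>; since the potential is radial and the
  trajectory enters and leaves at the same distance, the speed is preserved.\<close>
lemma energy_conservation:
  assumes rad: "radial2 V" and tau_pos: "0 < \<tau>"
    and x_init: "x 0 = xm" and v_init: "v 0 = vm" and vm_norm: "norm vm = 1"
    and x_deriv: "\<forall>t\<in>{0..\<tau>}. (x has_vector_derivative v t) (at t within {0..\<tau>})"
    and v_deriv: "\<forall>t\<in>{0..\<tau>}. (v has_vector_derivative Feps V a e (x t)) (at t within {0..\<tau>})"
    and same_radius: "norm (x \<tau>) = norm xm"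
  shows "norm (v \<tau>) = 1"
proof -
  define E where "E t = Veps V a e (x t) + (1/2) * (v t \<bullet> v t)" for t
  have "(E has_vector_derivative 0) (at t within {0..\<tau>})" if t: "t \<in> {0..\<tau>}" for t
  proof -
    let ?f = "force a e (x t)"
    have "(v has_vector_derivative ?f) (at t within {0..\<tau>})"
      using v_deriv t by (simp add: Feps_eq_force)
    from bounded_bilinear.has_vector_derivative[OF bounded_bilinear_inner this this]
    have kinetic: "((\<lambda>t. v t \<bullet> v t) has_vector_derivative v t \<bullet> ?f + ?f \<bullet> v t) (at t within {0..\<tau>})" .
    have potential: "((\<lambda>t. Veps V a e (x t)) has_vector_derivative - (?f \<bullet> v t)) (at t within {0..\<tau>})"
      using x_deriv t by (intro Veps_path_derivative) auto
    from has_vector_derivative_add[OF potential has_vector_derivative_mult[OF has_vector_derivative_const[of "1/2"] kinetic]]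
    show ?thesis by (simp add: E_def[abs_def] inner_commute)
  qed
  then have "norm (E \<tau> - E 0) \<le> 0 * (\<tau> - 0)"
    by (intro vector_mvt_bound[where S="{0..\<tau>}" and f'="\<lambda>_. 0"]) (use tau_pos in auto)
  then have "E \<tau> = E 0" by simp
  moreover have "Veps V a e (x \<tau>) = Veps V a e (x 0)"
    by (rule Veps_radial[OF rad]) (simp add: same_radius x_init)
  ultimately have "v \<tau> \<bullet> v \<tau> = vm \<bullet> vm" by (simp add: E_def v_init)
  then show ?thesis using vm_norm by (simp add: norm_eq_1)
qed

text \<open>\<open>X1 \<bullet> vm\<close> is the integral of \<open>-d/ds V(line s)\<close>, which vanishes because the line
  enters and leaves the ball at the same radius.\<close>
lemma X1_orthogonal:
  assumes rad: "radial2 V" and xm: "norm xm = e" and vm: "norm vm = 1"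
  shows "X1 V a e xm vm \<bullet> vm = 0"
proof -
  define th where "th = tau_hat xm vm"
  define line where "line s = xm + s *\<^sub>R vm" for s
  have X: "X1 V a e xm vm = integral {0..th} (\<lambda>s. force a e (line s))"
    by (simp add: X1_def th_def line_def Feps_eq_force)
  show ?thesis
  proof (cases "th > 0")
    case False
    then have "{0..th} = {} \<or> {0..th} = {0}" by auto
    then show ?thesis unfolding X by auto
  next
    case True
    have cont: "continuous_on {0..th} (\<lambda>s. force a e (line s))"
      unfolding line_def by (intro continuous_on_compose2[OF force_continuous] continuous_intros) auto
    have "integral {0..th} (\<lambda>s. force a e (line s)) \<bullet> vm = integral {0..th} (\<lambda>s. force a e (line s) \<bullet> vm)"
      using integral_linear[OF integrable_continuous_real[OF cont] bounded_linear_inner_left[of vm]]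
      by (simp add: o_def)
    moreover
    have "((\<lambda>s. Veps V a e (line s)) has_vector_derivative - (force a e (line s) \<bullet> vm)) (at s within {0..th})"
      for s unfolding line_def[abs_def] by (intro Veps_path_derivative) (auto intro!: derivative_eq_intros)
    then have "((\<lambda>s. - (force a e (line s) \<bullet> vm)) has_integral
                 (Veps V a e (line th) - Veps V a e (line 0))) {0..th}"
      by (intro fundamental_theorem_of_calculus) (use True in auto)
    moreover have "norm (line th) = norm (line 0)"
    proof -
      have "(norm (line th))\<^sup>2 = line th \<bullet> line th" by (rule power2_norm_eq_inner)
      also have "\<dots> = xm \<bullet> xm + 2 * th * (xm \<bullet> vm) + th^2 * (vm \<bullet> vm)"
        by (simp add: line_def inner_add_left inner_add_right inner_commute[of vm xm]
            power2_eq_square algebra_simps)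
      also have "\<dots> = xm \<bullet> xm"
        using vm by (simp add: th_def tau_hat_def norm_eq_1 power2_eq_square algebra_simps)
      also have "\<dots> = (norm (line 0))\<^sup>2" by (simp add: line_def power2_norm_eq_inner)
      finally show ?thesis using power2_eq_iff_nonneg by auto
    qed
    then have "Veps V a e (line th) = Veps V a e (line 0)" by (rule Veps_radial[OF rad])
    ultimately have "integral {0..th} (\<lambda>s. force a e (line s)) \<bullet> vm
        = integral {0..th} (\<lambda>s. force a e (line s) \<bullet> vm)"
      and "((\<lambda>s. force a e (line s) \<bullet> vm) has_integral 0) {0..th}"
      by (simp_all add: has_integral_neg_iff)
    then show ?thesis unfolding X by (simp add: integral_unique)
  qed
qed

text \<open>The constant \<open>K\<close> with \<open>|F| \<le> K\<epsilon>\<^sup>\<alpha>/\<epsilon>\<close>, \<open>|DF| \<le> K\<epsilon>\<^sup>\<alpha>/\<epsilon>\<^sup>2\<close>, \<open>Lip(DF) \<le> K\<epsilon>\<^sup>\<alpha>/\<epsilon>\<^sup>3\<close>.\<close>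
definition K_prof :: real where "K_prof = C_grad + C_hess + C_lip + 1"

lemma K_prof_bounds: "1 \<le> K_prof" "C_grad \<le> K_prof" "C_hess \<le> K_prof" "C_lip \<le> K_prof"
  using profile_constants_nonneg by (auto simp: K_prof_def)

lemma force_small:
  assumes e: "0 < e" and small: "K_prof * e powr a \<le> 1/64"
  shows "small_force (force a e) (dforce a e) e (K_prof * e powr a)"
proof -
  let ?k = "K_prof * e powr a"
  have scale: "c * e powr a / e^n \<le> ?k / e^n" if "c \<le> K_prof" for c n
    using that e by (auto intro!: divide_right_mono mult_right_mono)
  show ?thesis
  proof
    show "0 < e" "?k \<le> 1/64" by (fact e small)+
    show "0 < ?k" using e K_prof_bounds(1) by simp
    show "(force a e has_derivative dforce a e y) (at y)" for y by (rule force_has_derivative)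
    show "norm (force a e y) \<le> ?k / e" for y
      using force_bound[OF e, of a y] scale[OF K_prof_bounds(2), of 1] by simp
    show "norm (dforce a e y h) \<le> ?k / e^2 * norm h" for y h
      by (rule order.trans[OF dforce_bound[OF e] mult_right_mono[OF scale[OF K_prof_bounds(3)] norm_ge_zero]])
    show "norm (dforce a e y h - dforce a e z h) \<le> ?k / e^3 * norm (y - z) * norm h" for y z h
      using dforce_lipschitz[OF e, of a y h z]
        mult_right_mono[OF scale[OF K_prof_bounds(4)], of "norm (y - z) * norm h" 3]
      by (simp add: mult.assoc)
    show "norm (force a e y - force a e z - dforce a e z (y - z)) \<le> ?k / e^3 * (norm (y - z))\<^sup>2" for y z
      by (rule order.trans[OF force_taylor[OF e] mult_right_mono[OF scale[OF K_prof_bounds(4)] zero_le_power2]])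
    show "e \<le> norm y \<Longrightarrow> force a e y = 0" for y using force_vanish[OF e] by blast
    show "e \<le> norm y \<Longrightarrow> dforce a e y h = 0" for y h using dforce_vanish[OF e] by blast
  qed
qed

end

context profile
begin

lemma obstacle_scattering:
  fixes x v :: "real \<Rightarrow> real^2"
  assumes rad: "radial2 V" and eps: "0 < \<epsilon>" and small: "K_prof * \<epsilon> powr \<alpha> \<le> 1/64"
    and xm: "norm xm = \<epsilon>" and vm: "norm vm = 1" and tau: "0 < \<tau>"
    and x_init: "x 0 = xm" and v_init: "v 0 = vm"
    and x_deriv: "\<forall>t\<in>{0..\<tau>}. (x has_vector_derivative v t) (at t within {0..\<tau>})"
    and v_deriv: "\<forall>t\<in>{0..\<tau>}. (v has_vector_derivative Feps V \<alpha> \<epsilon> (x t)) (at t within {0..\<tau>})"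
    and inside: "\<forall>t\<in>{0<..<\<tau>}. norm (x t) < \<epsilon>" and exit: "norm (x \<tau>) = \<epsilon>"
  defines "k \<equiv> K_prof * \<epsilon> powr \<alpha>"
  shows "\<bar>\<tau> - tau_hat xm vm\<bar> \<le> 44 * k * \<epsilon>"
    and "norm (X1 V \<alpha> \<epsilon> xm vm) \<le> 2 * k"
    and "\<bar>(vec_angle vm (v \<tau>))\<^sup>2 - (norm (X1 V \<alpha> \<epsilon> xm vm))\<^sup>2\<bar> \<le> 500 * k^3"
    and "norm (v \<tau> - vm - X1 V \<alpha> \<epsilon> xm vm - X21 V \<alpha> \<epsilon> xm vm) \<le> 4000 * k^3"
    and "norm (X21 V \<alpha> \<epsilon> xm vm) \<le> 8 * k^2"
proof -
  interpret S: scattering "force \<alpha> \<epsilon>" "dforce \<alpha> \<epsilon>" \<epsilon> k xm vm x v \<tau>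
    unfolding k_def
    by (rule scattering.intro[OF force_small[OF eps small]], unfold_locales)
       (use xm vm tau x_init v_init x_deriv v_deriv inside exit in \<open>simp_all add: Feps_eq_force\<close>)
  have th: "S.th = tau_hat xm vm" by (simp add: S.th_def tau_hat_def)
  have X1: "X1 V \<alpha> \<epsilon> xm vm = S.impulse S.th"
    unfolding S.impulse_eq by (simp add: X1_def th Feps_eq_force)
  have X21: "X21 V \<alpha> \<epsilon> xm vm = integral {0..S.th} S.dcorr"
    unfolding S.dcorr_integral_eq using frechet_derivative_at[OF force_has_derivative, symmetric]
    by (simp add: X21_def th Feps_eq_force)
  show "\<bar>\<tau> - tau_hat xm vm\<bar> \<le> 44 * k * \<epsilon>" using S.tau_error th by simp
  show X1_bound: "norm (X1 V \<alpha> \<epsilon> xm vm) \<le> 2 * k" using S.impulse_bound X1 by simp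
  show X21_bound: "norm (X21 V \<alpha> \<epsilon> xm vm) \<le> 8 * k^2" using S.dcorr_integral_bound X21 by simp
  show second_order: "norm (v \<tau> - vm - X1 V \<alpha> \<epsilon> xm vm - X21 V \<alpha> \<epsilon> xm vm) \<le> 4000 * k^3"
    using S.velocity_second_order X1 X21 by simp
  have "norm (v \<tau>) = 1"
    by (rule energy_conservation[OF rad tau x_init v_init vm x_deriv v_deriv]) (simp add: exit xm)
  then have "\<bar>(vec_angle vm (v \<tau>))\<^sup>2 - (norm (v \<tau> - vm))\<^sup>2\<bar> \<le> 8 * (norm (v \<tau> - vm))^4"
    using angle_sq_chord_sq[OF vm] by (simp add: vec_angle_def vm)
  then show "\<bar>(vec_angle vm (v \<tau>))\<^sup>2 - (norm (X1 V \<alpha> \<epsilon> xm vm))\<^sup>2\<bar> \<le> 500 * k^3"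
    by (intro angle_sq_first_order[OF _ _ S.velocity_change_bound X1_bound X21_bound second_order])
       (use S.k_pos S.k_small in auto)
qed

end

lemma power_scaling_bounds:
  fixes K \<epsilon> \<alpha> :: real
  assumes K: "1 \<le> K" and eps: "0 < \<epsilon>"
  shows "44 * (K * \<epsilon> powr \<alpha>) * \<epsilon> \<le> 4000 * K^3 * \<epsilon> powr (1 + \<alpha>)"
    and "2 * (K * \<epsilon> powr \<alpha>) \<le> 4000 * K^3 * \<epsilon> powr \<alpha>"
    and "500 * (K * \<epsilon> powr \<alpha>)^3 \<le> 4000 * K^3 * \<epsilon> powr (3 * \<alpha>)"
    and "4000 * (K * \<epsilon> powr \<alpha>)^3 \<le> 4000 * K^3 * \<epsilon> powr (3 * \<alpha>)"
    and "8 * (K * \<epsilon> powr \<alpha>)^2 \<le> 4000 * K^3 * \<epsilon> powr (2 * \<alpha>)"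
proof -
  define l where "l = \<epsilon> powr \<alpha>"
  have l: "0 < l" using eps by (simp add: l_def)
  have K3: "K \<le> K^3" "K^2 \<le> K^3"
    using power_increasing[of 1 3 K] power_increasing[of 2 3 K] K by auto
  have "\<epsilon> powr (1 + \<alpha>) = \<epsilon> * l" "\<epsilon> powr (2 * \<alpha>) = l^2" "\<epsilon> powr (3 * \<alpha>) = l^3"
    using eps by (simp_all add: l_def powr_add powr_power)
  moreover have "44 * K * (\<epsilon> * l) \<le> 4000 * K^3 * (\<epsilon> * l)"
    using K3 K eps l by (intro mult_right_mono) auto
  moreover have "2 * K * l \<le> 4000 * K^3 * l" using K3 K l by (intro mult_right_mono) auto
  moreover have "8 * K^2 * l^2 \<le> 4000 * K^3 * l^2" using K3 K l by (intro mult_right_mono) auto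
  moreover have "500 * K^3 * l^3 \<le> 4000 * K^3 * l^3" using K l by simp
  ultimately show "44 * (K * \<epsilon> powr \<alpha>) * \<epsilon> \<le> 4000 * K^3 * \<epsilon> powr (1 + \<alpha>)"
    and "2 * (K * \<epsilon> powr \<alpha>) \<le> 4000 * K^3 * \<epsilon> powr \<alpha>"
    and "500 * (K * \<epsilon> powr \<alpha>)^3 \<le> 4000 * K^3 * \<epsilon> powr (3 * \<alpha>)"
    and "4000 * (K * \<epsilon> powr \<alpha>)^3 \<le> 4000 * K^3 * \<epsilon> powr (3 * \<alpha>)"
    and "8 * (K * \<epsilon> powr \<alpha>)^2 \<le> 4000 * K^3 * \<epsilon> powr (2 * \<alpha>)"
    by (simp_all add: l_def[symmetric] power_mult_distrib mult_ac)
qed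

lemma smallness_below_threshold:
  fixes K \<epsilon> \<alpha> :: real
  assumes "0 < \<alpha>" "1 \<le> K" "0 < \<epsilon>" "\<epsilon> < (1/(64*K)) powr (1/\<alpha>)"
  shows "K * \<epsilon> powr \<alpha> \<le> 1/64"
proof -
  have "\<epsilon> powr \<alpha> < ((1/(64*K)) powr (1/\<alpha>)) powr \<alpha>"
    using assms by (intro powr_less_mono2) auto
  also have "\<dots> = 1/(64*K)" using assms by (simp add: powr_powr)
  finally show ?thesis using assms(2) by (simp add: field_simps)
qed


lemma (in profile) obstacle_scattering_uniform:
  fixes x v :: "real \<Rightarrow> real^2"
  assumes rad: "radial2 V" and alpha: "0 < \<alpha>"
    and eps: "0 < \<epsilon>" "\<epsilon> < (1/(64*K_prof)) powr (1/\<alpha>)"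
    and traj: "norm xm = \<epsilon>" "norm vm = 1" "0 < \<tau>" "x 0 = xm" "v 0 = vm"
      "\<forall>t\<in>{0..\<tau>}. (x has_vector_derivative v t) (at t within {0..\<tau>})"
      "\<forall>t\<in>{0..\<tau>}. (v has_vector_derivative Feps V \<alpha> \<epsilon> (x t)) (at t within {0..\<tau>})"
      "\<forall>t\<in>{0<..<\<tau>}. norm (x t) < \<epsilon>" "norm (x \<tau>) = \<epsilon>"
  shows "\<bar>\<tau> - tau_hat xm vm\<bar> \<le> 4000 * K_prof^3 * \<epsilon> powr (1 + \<alpha>)
     \<and> norm (X1 V \<alpha> \<epsilon> xm vm) \<le> 4000 * K_prof^3 * \<epsilon> powr \<alpha>
     \<and> \<bar>(vec_angle vm (v \<tau>))\<^sup>2 - (norm (X1 V \<alpha> \<epsilon> xm vm))\<^sup>2\<bar> \<le> 4000 * K_prof^3 * \<epsilon> powr (3 * \<alpha>)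
     \<and> norm (v \<tau> - vm - X1 V \<alpha> \<epsilon> xm vm - X21 V \<alpha> \<epsilon> xm vm) \<le> 4000 * K_prof^3 * \<epsilon> powr (3 * \<alpha>)
     \<and> norm (X21 V \<alpha> \<epsilon> xm vm) \<le> 4000 * K_prof^3 * \<epsilon> powr (2 * \<alpha>)"
proof -
  have "K_prof * \<epsilon> powr \<alpha> \<le> 1/64"
    by (rule smallness_below_threshold[OF alpha K_prof_bounds(1) eps])
  note est = obstacle_scattering[OF rad eps(1) this traj]
  note scale = power_scaling_bounds[OF K_prof_bounds(1) eps(1), of \<alpha>]
  show ?thesis using est scale by (meson order.trans)
qed

theorem mainTheorem3:
  fixes V :: "real^2 \<Rightarrow> real" and \<alpha> :: real
  assumes smooth: "smooth2 V"
    and radial: "radial2 V"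
    and supp: "\<And>y. norm y > 1 \<Longrightarrow> V y = 0"
    and alpha: "0 < \<alpha>" "\<alpha> < 1/2"
  shows
    "(\<forall>\<epsilon> xm vm. 0 < \<epsilon> \<and> norm xm = \<epsilon> \<and> norm vm = 1 \<longrightarrow> X1 V \<alpha> \<epsilon> xm vm \<bullet> vm = 0)
     \<and>
     (\<exists>C \<epsilon>0. 0 < C \<and> 0 < \<epsilon>0 \<and>
       (\<forall>\<epsilon> xm vm (x :: real \<Rightarrow> real^2) (v :: real \<Rightarrow> real^2) \<tau>.
          0 < \<epsilon> \<and> \<epsilon> < \<epsilon>0 \<and> norm xm = \<epsilon> \<and> norm vm = 1 \<and> 0 < \<tau>
          \<and> x 0 = xm \<and> v 0 = vm
          \<and> (\<forall>t\<in>{0..\<tau>}. (x has_vector_derivative v t) (at t within {0..\<tau>}))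
          \<and> (\<forall>t\<in>{0..\<tau>}. (v has_vector_derivative Feps V \<alpha> \<epsilon> (x t)) (at t within {0..\<tau>}))
          \<and> (\<forall>t\<in>{0<..<\<tau>}. norm (x t) < \<epsilon>)
          \<and> norm (x \<tau>) = \<epsilon>
          \<longrightarrow>
            \<bar>\<tau> - tau_hat xm vm\<bar> \<le> C * \<epsilon> powr (1 + \<alpha>)
          \<and> norm (X1 V \<alpha> \<epsilon> xm vm) \<le> C * \<epsilon> powr \<alpha>
          \<and> \<bar>(vec_angle vm (v \<tau>))\<^sup>2 - (norm (X1 V \<alpha> \<epsilon> xm vm))\<^sup>2\<bar> \<le> C * \<epsilon> powr (3 * \<alpha>)
          \<and> norm (v \<tau> - vm - X1 V \<alpha> \<epsilon> xm vm - X21 V \<alpha> \<epsilon> xm vm) \<le> C * \<epsilon> powr (3 * \<alpha>)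
          \<and> norm (X21 V \<alpha> \<epsilon> xm vm) \<le> C * \<epsilon> powr (2 * \<alpha>)))"
proof -
  interpret profile V using smooth supp by unfold_locales
  let "?orthogonality \<and> ?estimates" = ?thesis
  have ?orthogonality using X1_orthogonal[OF radial] by blast
  moreover have ?estimates
  proof (rule exI[of _ "4000 * K_prof^3"], rule exI[of _ "(1/(64*K_prof)) powr (1/\<alpha>)"],
      intro conjI[of "0 < _"] allI impI)
    show "0 < 4000 * K_prof^3" "0 < (1/(64*K_prof)) powr (1/\<alpha>)"
      using K_prof_bounds(1) by simp_all
  qed (elim conjE, rule obstacle_scattering_uniform[OF radial alpha(1)])
  ultimately show ?thesis by blast
qed

end
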